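(* Let $\mathrm{R}$ be a real closed field, $\mathrm{C}=\mathrm{R}[i]$, let $F/G\in\mathrm{C}(Z)\setminus\{0\}$, $\gamma\in\mathrm{C}\setminus\{0\}$ and let $\Gamma=[x_0,x_1]\times[y_0,y_1]\subset\mathrm{R}^2$ with $x_0<x_1$, $y_0<y_1$, such that $\mathrm{val}_z(F/G)$ is even for every vertex $z$ of $\Gamma$. Then $\mathrm{w}(F/G\mid\partial\Gamma)=\mathrm{w}(\gamma F/G\mid\partial\Gamma)$.
   Context: Points $(x,y)\in\mathrm{R}^2$ are identified with $x+iy\in\mathrm{C}$. For nonzero $P\in\mathrm{R}[X]$ and $x\in\mathrm{R}$ write uniquely $P=(X-x)^{\mathrm{mult}_x(P)}P_x$ with $P_x(x)\neq0$; for $P,Q\neq0$ set $\mathrm{val}_x(P/Q)=\mathrm{mult}_x(P)-\mathrm{mult}_x(Q)$. For $P,Q\in\mathrm{R}[X]$, $x\in\mathrm{R}$: $\mathrm{Ind}^+_x(P,Q)=\tfrac12\,\mathrm{sign}(P_x(x)Q_x(x))$ and $\mathrm{Ind}^-_x(P,Q)=\tfrac12(-1)^{\mathrm{val}_x(P/Q)}\mathrm{sign}(P_x(x)Q_x(x))$ if $P\ne0$, $Q\neq0$ and $\mathrm{val}_x(P/Q)<0$, and both are $0$ otherwise; $\mathrm{Ind}_x=\mathrm{Ind}^+_x-\mathrm{Ind}^-_x$. For $a<b$, $\mathrm{Ind}_a^b(P,Q)=\mathrm{Ind}_a^+(P,Q)+\sum_{x\in(a,b)}\mathrm{Ind}_x(P,Q)-\mathrm{Ind}_b^-(P,Q)$;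 $\mathrm{Ind}_a^b=-\mathrm{Ind}_b^a$ if $b<a$, and $\mathrm{Ind}_a^a=0$. For $F\in\mathrm{C}[X,Y]$ let $F_{\rm re},F_{\rm im}\in\mathrm{R}[X,Y]$ with $F=F_{\rm re}+iF_{\rm im}$, and $\overline F=F_{\rm re}-iF_{\rm im}$. Define $\mathrm{w}(F\mid\partial\Gamma)=\tfrac12\big(\mathrm{Ind}_{x_0}^{x_1}(F_{\rm re}(T,y_0),F_{\rm im}(T,y_0))+\mathrm{Ind}_{y_0}^{y_1}(F_{\rm re}(x_1,T),F_{\rm im}(x_1,T))+\mathrm{Ind}_{x_1}^{x_0}(F_{\rm re}(T,y_1),F_{\rm im}(T,y_1))+\mathrm{Ind}_{y_1}^{y_0}(F_{\rm re}(x_0,T),F_{\rm im}(x_0,T))\big)$. $\mathrm{C}[Z]\subset\mathrm{C}[X,Y]$ via $Z=X+iY$. For $F,G\in\mathrm{C}[X,Y]$, $G\neq0$, $\mathrm{w}(F/G\mid\partial\Gamma):=\mathrm{w}(F\overline G\mid\partial\Gamma)$ (independent of the representation). For nonzero $F\in\mathrm{C}[Z]$, $z\in\mathrm{C}$ write $F=(Z-z)^{\mathrm{mult}_z(F)}F_z$ with $F_z(z)\ne0$, and $\mathrm{val}_z(F/G)=\mathrm{mult}_z(F)-\mathrm{mult}_z(G)$ for $F,G\ne0$. *)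

theory Defs
  imports "HOL-Computational_Algebra.Polynomial"
begin

text \<open>An ordered field in which every non-negative element is a square and every
(monic, w.l.o.g.) polynomial of odd degree has a root (the standard characterisation of real closed
fields).\<close>

class real_closed_field = linordered_field +
  assumes rcf_sqrt: "0 \<le> x \<Longrightarrow> \<exists>y. y * y = x"
  assumes rcf_odd_root: "odd n \<Longrightarrow> \<exists>x. x ^ n + (\<Sum>i<n. c i * x ^ i) = 0"

datatype 'a cpx = Cpx (Re: 'a) (Im: 'a)

instantiation cpx :: (comm_ring_1) comm_ring_1
begin
definition "0 = Cpx 0 0"
definition "1 = Cpx 1 0"
definition "z + w = Cpx (Re z + Re w) (Im z + Im w)"
definition "z - w = Cpx (Re z - Re w) (Im z - Im w)"
definition "- z = Cpx (- Re z) (- Im z)"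
definition "z * w = Cpx (Re z * Re w - Im z * Im w) (Re z * Im w + Im z * Re w)"
instance
  by intro_classes
     (auto simp: zero_cpx_def one_cpx_def plus_cpx_def minus_cpx_def uminus_cpx_def
                 times_cpx_def algebra_simps cpx.expand)
end

lemma cpx_no_zero_divisors:
  fixes z w :: "'a::linordered_idom cpx"
  assumes "z * w = 0" shows "z = 0 \<or> w = 0"
proof -
  obtain a b where z: "z = Cpx a b" by (cases z)
  obtain c d where w: "w = Cpx c d" by (cases w)
  from assms have e1: "a*c - b*d = 0" and e2: "a*d + b*c = 0"
    by (auto simp: z w times_cpx_def zero_cpx_def)
  have "(a*a + b*b) * (c*c + d*d) = (a*c - b*d)*(a*c - b*d) + (a*d + b*c)*(a*d + b*c)"
    by (simp add: algebra_simps)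
  also have "\<dots> = 0" using e1 e2 by simp
  finally have "a*a + b*b = 0 \<or> c*c + d*d = 0" by simp
  then show ?thesis
    by (auto simp: z w zero_cpx_def add_nonneg_eq_0_iff)
qed

instance cpx :: (linordered_idom) idom
  by intro_classes (use cpx_no_zero_divisors in blast)

definition cnj :: "'a::comm_ring_1 cpx \<Rightarrow> 'a cpx" where
  "cnj z = Cpx (Re z) (- Im z)"

definition cofactor :: "'a::field poly \<Rightarrow> 'a \<Rightarrow> 'a poly" where
  "cofactor P x = P div [:- x, 1:] ^ order x P"

definition val_at :: "'a::idom poly \<Rightarrow> 'a poly \<Rightarrow> 'a \<Rightarrow> int" where
  "val_at P Q x = int (order x P) - int (order x Q)"

definition ind_plus :: "'a::linordered_field poly \<Rightarrow> 'a poly \<Rightarrow> 'a \<Rightarrow> 'a" where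
  "ind_plus P Q x =
     (if P \<noteq> 0 \<and> Q \<noteq> 0 \<and> val_at P Q x < 0
      then sgn (poly (cofactor P x) x * poly (cofactor Q x) x) / 2 else 0)"

definition ind_minus :: "'a::linordered_field poly \<Rightarrow> 'a poly \<Rightarrow> 'a \<Rightarrow> 'a" where
  "ind_minus P Q x =
     (if P \<noteq> 0 \<and> Q \<noteq> 0 \<and> val_at P Q x < 0
      then (-1) powi (val_at P Q x) * sgn (poly (cofactor P x) x * poly (cofactor Q x) x) / 2
      else 0)"

definition ind_at :: "'a::linordered_field poly \<Rightarrow> 'a poly \<Rightarrow> 'a \<Rightarrow> 'a" where
  "ind_at P Q x = ind_plus P Q x - ind_minus P Q x"

definition ind_lt :: "'a::linordered_field \<Rightarrow> 'a \<Rightarrow> 'a poly \<Rightarrow> 'a poly \<Rightarrow> 'a" where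
  "ind_lt a b P Q = ind_plus P Q a
      + (\<Sum>x\<in>{x. a < x \<and> x < b \<and> ind_at P Q x \<noteq> 0}. ind_at P Q x)
      - ind_minus P Q b"

definition cind :: "'a::linordered_field \<Rightarrow> 'a \<Rightarrow> 'a poly \<Rightarrow> 'a poly \<Rightarrow> 'a" where
  "cind a b P Q = (if a < b then ind_lt a b P Q else if b < a then - ind_lt b a P Q else 0)"

text \<open>Restriction of \<open>F \<in> C[Z] \<subseteq> C[X,Y]\<close> (with \<open>Z = X + iY\<close>) to the horizontal line
\<open>Y = y\<close> resp. the vertical line \<open>X = x\<close>, as a polynomial in \<open>T\<close> over \<open>C\<close>.\<close>
definition restr_h :: "'a::comm_ring_1 cpx poly \<Rightarrow> 'a \<Rightarrow> 'a cpx poly" where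
  "restr_h F y = pcompose F [:Cpx 0 y, 1:]"

definition restr_v :: "'a::comm_ring_1 cpx poly \<Rightarrow> 'a \<Rightarrow> 'a cpx poly" where
  "restr_v F x = pcompose F [:Cpx x 0, Cpx 0 1:]"

definition re_poly :: "'a::comm_ring_1 cpx poly \<Rightarrow> 'a poly" where
  "re_poly H = map_poly Re H"
definition im_poly :: "'a::comm_ring_1 cpx poly \<Rightarrow> 'a poly" where
  "im_poly H = map_poly Im H"

text \<open>On a line with real parameter \<open>T\<close>, the restriction of \<open>\<overline>G\<close> is obtained by conjugating
the coefficients of the restriction of \<open>G\<close>; hence the restriction of \<open>F \<overline>G\<close> is
\<open>edge F G\<close> below.\<close>
definition edge_prod :: "'a::comm_ring_1 cpx poly \<Rightarrow> 'a cpx poly \<Rightarrow> 'a cpx poly" where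
  "edge_prod A B = A * map_poly cnj B"

text \<open>\<open>w(F/G | \<partial>\<Gamma>) := w(F \<overline>G | \<partial>\<Gamma>)\<close> for \<open>\<Gamma> = [x0,x1] \<times> [y0,y1]\<close>.\<close>
definition wind_frac ::
  "'a::linordered_field cpx poly \<Rightarrow> 'a cpx poly \<Rightarrow> 'a \<Rightarrow> 'a \<Rightarrow> 'a \<Rightarrow> 'a \<Rightarrow> 'a" where
  "wind_frac F G x0 x1 y0 y1 =
    (let H0 = edge_prod (restr_h F y0) (restr_h G y0);
         V1 = edge_prod (restr_v F x1) (restr_v G x1);
         H1 = edge_prod (restr_h F y1) (restr_h G y1);
         V0 = edge_prod (restr_v F x0) (restr_v G x0)
     in (cind x0 x1 (re_poly H0) (im_poly H0)
       + cind y0 y1 (re_poly V1) (im_poly V1)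
       + cind x1 x0 (re_poly H1) (im_poly H1)
       + cind y1 y0 (re_poly V0) (im_poly V0)) / 2)"

definition cval :: "'a::linordered_idom cpx poly \<Rightarrow> 'a cpx poly \<Rightarrow> 'a cpx \<Rightarrow> int" where
  "cval F G z = int (order z F) - int (order z G)"

end

theory Submission
  imports Defs "HOL-Algebra.Algebraic_Closure_Type" "Jordan_Normal_Form.Char_Poly"
begin

text \<open>Write \<open>\<gamma> = \<alpha> + i\<beta>\<close> and let \<open>P, Q\<close> be the real and imaginary parts of the
  restriction \<open>H\<close> of \<open>F \<overline>G\<close> to an edge; those of \<open>\<gamma>H\<close> are \<open>\<alpha>P - \<beta>Q\<close> and
  \<open>\<beta>P + \<alpha>Q\<close>. The Cauchy index of \<open>(P, Q)\<close> does not change if a multiple of \<open>Q\<close> is added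
  to \<open>P\<close>, so for \<open>\<beta> \<noteq> 0\<close> the index of the rotated pair is \<open>-Ind(Q, P + (\<alpha>/\<beta>)Q)\<close>. The
  inversion formula \<open>Ind(A, B) + Ind(B, A) = (sign of A/B at the endpoints)/2\<close> turns this into
  \<open>Ind(P, Q)\<close> plus a boundary term at each end of the edge. The inversion formula rests on the
  intermediate value property of polynomials, which holds over a real closed field because
  \<open>R[i]\<close> is algebraically closed (Laplace's proof). At a vertex \<open>z\<close>, after removing the common
  factor \<open>(T - t)\<^bsup>m+n\<^esup>\<close>, the restrictions to the horizontal and to the vertical edge differ by
  the unit \<open>i\<^sup>m (-i)\<^sup>n\<close>, which is \<open>\<plusminus>1\<close> when \<open>m - n = val\<^sub>z(F/G)\<close> is even; then the two
  boundary terms at \<open>z\<close> agree, and they cancel around the rectangle.\<close>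

hide_const (open) UnivPoly.coeff UnivPoly.monom UnivPoly.deg Polynomials.degree
  Polynomials.lead_coeff Module.module.smult Coset.order Determinant.cofactor

section \<open>Complex numbers over an ordered field\<close>

instantiation cpx :: (linordered_field) field
begin

definition "inverse z =
  Cpx (Re z / (Re z * Re z + Im z * Im z)) (- Im z / (Re z * Re z + Im z * Im z))"

definition "z div w = z * inverse (w :: 'a cpx)"

instance
proof
  fix z :: "'a cpx"
  assume "z \<noteq> 0"
  obtain a b where z: "z = Cpx a b" by (cases z)
  with \<open>z \<noteq> 0\<close> have d: "a * a + b * b \<noteq> 0"
    by (auto simp: zero_cpx_def add_nonneg_eq_0_iff)
  have "a / (a * a + b * b) * a - - b / (a * a + b * b) * b
      = a * a / (a * a + b * b) + b * b / (a * a + b * b)"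
    by simp
  also have "\<dots> = (a * a + b * b) / (a * a + b * b)"
    by (rule add_divide_distrib[symmetric])
  also have "\<dots> = 1" using d by simp
  finally have "a / (a * a + b * b) * a - - b / (a * a + b * b) * b = 1" .
  moreover have "a / (a * a + b * b) * b + - b / (a * a + b * b) * a = 0"
    by (simp add: times_divide_eq_left mult.commute)
  ultimately show "inverse z * z = 1"
    by (simp add: z inverse_cpx_def times_cpx_def one_cpx_def)
next
  show "inverse (0::'a cpx) = 0" by (simp add: inverse_cpx_def zero_cpx_def)
qed (simp add: divide_cpx_def)

end

lemma cpx_eq_iff: "z = w \<longleftrightarrow> Re z = Re w \<and> Im z = Im w"
  by (cases z, cases w) auto

lemma Re_0 [simp]: "Re 0 = 0" and Im_0 [simp]: "Im 0 = 0"
  by (simp_all add: zero_cpx_def)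
lemma Re_1 [simp]: "Re 1 = 1" and Im_1 [simp]: "Im 1 = 0"
  by (simp_all add: one_cpx_def)
lemma Re_add [simp]: "Re (z + w) = Re z + Re w" and Im_add [simp]: "Im (z + w) = Im z + Im w"
  by (simp_all add: plus_cpx_def)
lemma Re_diff [simp]: "Re (z - w) = Re z - Re w" and Im_diff [simp]: "Im (z - w) = Im z - Im w"
  by (simp_all add: minus_cpx_def)
lemma Re_uminus [simp]: "Re (- z) = - Re z" and Im_uminus [simp]: "Im (- z) = - Im z"
  by (simp_all add: uminus_cpx_def)
lemma Re_mult [simp]: "Re (z * w) = Re z * Re w - Im z * Im w"
  and Im_mult [simp]: "Im (z * w) = Re z * Im w + Im z * Re w"
  by (simp_all add: times_cpx_def)

definition cpx_of_real :: "'a::comm_ring_1 \<Rightarrow> 'a cpx" where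
  "cpx_of_real a = Cpx a 0"

lemma Re_cpx_of_real [simp]: "Re (cpx_of_real a) = a"
  and Im_cpx_of_real [simp]: "Im (cpx_of_real a) = 0"
  by (simp_all add: cpx_of_real_def)

interpretation cpx_of_real_hom: field_hom "cpx_of_real :: 'a::linordered_field \<Rightarrow> 'a cpx"
  by unfold_locales (simp_all add: cpx_eq_iff)

interpretation cpx_of_real_poly: map_poly_idom_hom "cpx_of_real :: 'a::linordered_field \<Rightarrow> 'a cpx" ..

interpretation cnj_hom: field_hom "cnj :: 'a::linordered_field cpx \<Rightarrow> 'a cpx"
  by unfold_locales (simp_all add: cnj_def cpx_eq_iff)

interpretation cnj_poly: map_poly_idom_hom "cnj :: 'a::linordered_field cpx \<Rightarrow> 'a cpx" ..

lemma cnj_cpx_of_real [simp]: "cnj (cpx_of_real t) = cpx_of_real (t::'a::linordered_field)"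
  by (simp add: cnj_def cpx_of_real_def)

lemma real_closed_sqrt:
  fixes x :: "'a::real_closed_field"
  assumes "0 \<le> x"
  obtains y where "0 \<le> y" "y * y = x"
proof -
  obtain y where "y * y = x" using rcf_sqrt[OF assms] by blast
  then have "\<bar>y\<bar> * \<bar>y\<bar> = x" by (simp add: abs_mult_self_eq)
  then show ?thesis using that abs_ge_zero by blast
qed

lemma cpx_sqrt_exists: "\<exists>u::'a::real_closed_field cpx. u * u = s"
proof -
  define a b where "a = Re s" and "b = Im s"
  obtain r where r0: "0 \<le> r" and rr: "r * r = a * a + b * b"
    using real_closed_sqrt[of "a * a + b * b"] by (metis add_nonneg_nonneg zero_le_square)
  have "\<bar>a\<bar> * \<bar>a\<bar> \<le> r * r" using rr by (simp add: abs_mult_self_eq)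
  then have ra: "\<bar>a\<bar> \<le> r" using r0 by (meson abs_ge_zero mult_mono not_le less_le_trans mult_strict_mono)
  have "0 \<le> (r + a) / 2" "0 \<le> (r - a) / 2" using ra by auto
  then obtain x y where x0: "0 \<le> x" and xx: "x * x = (r + a) / 2"
    and y0: "0 \<le> y" and yy: "y * y = (r - a) / 2"
    by (metis real_closed_sqrt)
  have "(2 * x * y)\<^sup>2 = 4 * (x * x) * (y * y)" by (simp add: power2_eq_square algebra_simps)
  also have "\<dots> = (r + a) * (r - a)" by (simp add: xx yy)
  also have "\<dots> = \<bar>b\<bar>\<^sup>2" using rr by (simp add: power2_eq_square algebra_simps abs_mult_self_eq)
  finally have xyb: "2 * x * y = \<bar>b\<bar>"
    by (subst (asm) power2_eq_iff_nonneg) (use x0 y0 in auto)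
  define y' where "y' = (if b < 0 then - y else y)"
  have "x * x - y' * y' = a" by (simp add: y'_def xx yy field_simps)
  moreover have "x * y' + y' * x = b" using xyb by (auto simp: y'_def algebra_simps)
  ultimately have "Cpx x y' * Cpx x y' = s" by (simp add: cpx_eq_iff a_def b_def)
  then show ?thesis by blast
qed

lemma odd_degree_poly_has_root:
  fixes p :: "'a::real_closed_field poly"
  assumes "odd (degree p)"
  shows "\<exists>x. poly p x = 0"
proof -
  define n where "n = degree p"
  have lc: "lead_coeff p \<noteq> 0" using assms by auto
  obtain x where x: "x ^ n + (\<Sum>i<n. (coeff p i / lead_coeff p) * x ^ i) = 0"
    using rcf_odd_root[of n "\<lambda>i. coeff p i / lead_coeff p"] assms n_def by blast
  have "poly p x = (\<Sum>i<n. coeff p i * x ^ i) + lead_coeff p * x ^ n"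
    by (simp add: poly_altdef n_def flip: lessThan_Suc_atMost)
  also have "\<dots> = lead_coeff p * (x ^ n + (\<Sum>i<n. (coeff p i / lead_coeff p) * x ^ i))"
    using lc by (simp add: algebra_simps sum_distrib_left)
  finally show ?thesis using x by auto
qed

section \<open>Laplace's proof that real polynomials have complex roots\<close>

definition real_to_ac :: "'a::linordered_field \<Rightarrow> 'a cpx alg_closure" where
  "real_to_ac a = to_ac (cpx_of_real a)"

interpretation to_ac_hom: field_hom "to_ac :: 'a::field \<Rightarrow> 'a alg_closure"
  by unfold_locales simp_all

interpretation real_to_ac_hom: field_hom "real_to_ac :: 'a::linordered_field \<Rightarrow> 'a cpx alg_closure"
  by unfold_locales
    (simp_all add: real_to_ac_def cpx_of_real_hom.hom_add cpx_of_real_hom.hom_mult)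

lemma real_to_ac_inj [simp]: "real_to_ac a = real_to_ac b \<longleftrightarrow> a = b"
  by (simp add: real_to_ac_def)

interpretation real_to_ac_poly:
  map_poly_inj_idom_hom "real_to_ac :: 'a::linordered_field \<Rightarrow> 'a cpx alg_closure" ..

lemma map_poly_real_to_ac: "map_poly real_to_ac p = map_poly to_ac (map_poly cpx_of_real p)"
  unfolding real_to_ac_def[abs_def] by (simp add: map_poly_map_poly o_def)

lemma sum_in_range_real_to_ac:
  assumes "\<forall>i\<in>A. f i \<in> range (real_to_ac :: 'a::linordered_field \<Rightarrow> _)"
  shows "sum f A \<in> range real_to_ac"
proof -
  have "sum f A = real_to_ac (\<Sum>i\<in>A. inv_into UNIV real_to_ac (f i))"
    using assms by (simp add: real_to_ac_hom.hom_sum f_inv_into_f)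
  then show ?thesis by simp
qed

lemma poly_in_range_if_coeffs_in_range:
  fixes P :: "'a::linordered_field cpx alg_closure poly"
  assumes "\<forall>i. coeff P i \<in> range real_to_ac"
  shows "P \<in> range (map_poly real_to_ac)"
proof -
  have "inv_into UNIV real_to_ac (0::'a cpx alg_closure) = (0::'a)"
    by (metis inv_f_f real_to_ac_hom.hom_zero real_to_ac_hom.injectivity injI)
  then have "map_poly real_to_ac (map_poly (inv_into UNIV real_to_ac) P) = P"
    using assms by (intro poly_eqI) (simp add: coeff_map_poly f_inv_into_f)
  then show ?thesis by (metis rangeI)
qed

text \<open>Divided differences at points of \<open>R\<close> stay in \<open>R\<close>.\<close>
lemma poly_in_range_if_values_in_range:
  fixes P :: "'a::linordered_field cpx alg_closure poly"
  assumes "infinite S" "\<forall>x\<in>S. poly P (real_to_ac x) \<in> range real_to_ac"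
  shows "P \<in> range (map_poly real_to_ac)"
  using assms
proof (induction "degree P" arbitrary: P S rule: less_induct)
  case less
  from less.prems obtain a where aS: "a \<in> S" by (metis finite.emptyI ex_in_conv)
  with less.prems obtain b where b: "poly P (real_to_ac a) = real_to_ac b" by blast
  show ?case
  proof (cases "degree P = 0")
    case True
    then obtain c where P: "P = [:c:]" by (metis degree_eq_zeroE)
    with b have "P = map_poly real_to_ac [:b:]" by (simp add: real_to_ac_hom.map_poly_pCons_hom)
    then show ?thesis by blast
  next
    case False
    have "poly (P - [:real_to_ac b:]) (real_to_ac a) = 0" using b by simp
    then obtain P1 where P1: "P - [:real_to_ac b:] = [:- real_to_ac a, 1:] * P1"
      by (metis dvdE poly_eq_0_iff_dvd)
    have deq: "degree (P - [:real_to_ac b:]) = degree P"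
      using False by (metis add_0 degree_add_eq_left degree_pCons_0 diff_conv_add_uminus
          neq0_conv degree_minus pCons_0_0 minus_pCons uminus_poly.abs_eq)
    have P10: "P1 \<noteq> 0" using P1 False
      by (metis add_0 degree_0 diff_add_cancel degree_pCons_0 mult_zero_right)
    have "degree P = degree ([:- real_to_ac a, 1:] * P1)" using deq P1 by metis
    also have "\<dots> = Suc (degree P1)" using P10 by (subst degree_mult_eq) auto
    finally have dP1: "degree P1 < degree P" by simp
    have "poly P1 (real_to_ac x) \<in> range real_to_ac" if x: "x \<in> S - {a}" for x
    proof -
      from x less.prems obtain y where y: "poly P (real_to_ac x) = real_to_ac y" by blast
      have "poly (P - [:real_to_ac b:]) (real_to_ac x) = poly ([:- real_to_ac a, 1:] * P1) (real_to_ac x)"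
        by (simp only: P1)
      then have "real_to_ac y - real_to_ac b = (real_to_ac x - real_to_ac a) * poly P1 (real_to_ac x)"
        using y by (simp add: algebra_simps)
      moreover have "real_to_ac x - real_to_ac a \<noteq> 0" using x by simp
      ultimately have "poly P1 (real_to_ac x) = real_to_ac ((y - b) / (x - a))"
        by (simp add: field_simps hom_distribs)
      then show ?thesis by simp
    qed
    moreover have "infinite (S - {a})" using less.prems by simp
    ultimately obtain p1 where p1: "P1 = map_poly real_to_ac p1"
      using less.hyps[OF dP1] by blast
    have "P = [:real_to_ac b:] + [:- real_to_ac a, 1:] * P1" using P1 by (simp add: algebra_simps)
    also have "\<dots> = map_poly real_to_ac ([:b:] + [:- a, 1:] * p1)"
      by (simp add: p1 hom_distribs)
    finally show ?thesis by blast
  qed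
qed

lemma prod_mset_swap:
  "(\<Prod>x\<in>#A. \<Prod>y\<in>#B. f x y) = (\<Prod>y\<in>#B. \<Prod>x\<in>#A. (f x y :: 'b::comm_monoid_mult))"
  by (induction A) (simp_all add: prod_mset.distrib)

lemma prod_mset_minus_diff:
  "(\<Prod>x\<in>#A. (y - x)) = (-1) ^ size A * (\<Prod>x\<in>#A. (x - (y::'b::comm_ring_1)))"
  by (induction A) (simp_all add: algebra_simps)

lemma prod_roots_poly_swap:
  fixes M N :: "'b::comm_ring_1 multiset"
  assumes "P = smult c (\<Prod>x\<in>#M. [:-x, 1:])" and "A = smult d (\<Prod>y\<in>#N. [:-y, 1:])"
  shows "c ^ size N * (-1) ^ (size M * size N) * (\<Prod>x\<in>#M. poly A x)
    = d ^ size M * (\<Prod>y\<in>#N. poly P y)"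
proof -
  have "(\<Prod>y\<in>#N. poly P y) = c ^ size N * (-1) ^ (size M * size N) * (\<Prod>x\<in>#M. \<Prod>y\<in>#N. x - y)"
    by (simp add: assms(1) poly_prod_mset prod_mset.distrib prod_mset_constant prod_mset_minus_diff
        prod_mset_swap[of _ M] power_mult)
  moreover have "(\<Prod>x\<in>#M. poly A x) = d ^ size M * (\<Prod>x\<in>#M. \<Prod>y\<in>#N. x - y)"
    by (simp add: assms(2) poly_prod_mset prod_mset.distrib prod_mset_constant)
  ultimately show ?thesis by (simp add: algebra_simps)
qed

lemma prod_roots_poly_in_range_swap:
  fixes p a :: "'a::linordered_field poly" and M N :: "'a cpx alg_closure multiset"
  assumes "p \<noteq> 0"
    and p: "map_poly real_to_ac p = smult (real_to_ac (lead_coeff p)) (\<Prod>x\<in>#M. [:-x,1:])"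
    and a: "map_poly real_to_ac a = smult (real_to_ac (lead_coeff a)) (\<Prod>y\<in>#N. [:-y,1:])"
    and "(\<Prod>y\<in>#N. poly (map_poly real_to_ac p) y) \<in> range real_to_ac"
  shows "(\<Prod>x\<in>#M. poly (map_poly real_to_ac a) x) \<in> range real_to_ac"
proof -
  obtain w where "(\<Prod>y\<in>#N. poly (map_poly real_to_ac p) y) = real_to_ac w" using assms(4) by blast
  define u v where "u = lead_coeff p ^ size N * (-1) ^ (size M * size N)"
    and "v = lead_coeff a ^ size M * w"
  have "u \<noteq> 0" using assms(1) by (simp add: u_def)
  have eq: "real_to_ac u * (\<Prod>x\<in>#M. poly (map_poly real_to_ac a) x) = real_to_ac v"
    using prod_roots_poly_swap[OF p a] \<open>_ = real_to_ac w\<close> by (simp add: u_def v_def hom_distribs)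
  have "(\<Prod>x\<in>#M. poly (map_poly real_to_ac a) x)
      = real_to_ac u * (\<Prod>x\<in>#M. poly (map_poly real_to_ac a) x) / real_to_ac u"
    using \<open>u \<noteq> 0\<close> by simp
  also have "\<dots> = real_to_ac (v / u)" by (simp only: eq real_to_ac_hom.hom_div)
  finally show ?thesis by (rule ssubst) (rule rangeI)
qed

text \<open>The induction follows the Euclidean algorithm: reduce \<open>a\<close> modulo \<open>p\<close>, or, if
  \<open>deg a < deg p\<close>, exchange the roles of \<open>a\<close> and \<open>p\<close> (the two products agree up to a factor
  in \<open>R\<close>).\<close>
lemma prod_roots_poly_in_range:
  fixes p a :: "'a::linordered_field poly" and M :: "'a cpx alg_closure multiset"
  assumes "p \<noteq> 0" "size M = degree p"
    and "map_poly real_to_ac p = smult (real_to_ac (lead_coeff p)) (\<Prod>x\<in>#M. [:-x,1:])"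
  shows "(\<Prod>x\<in>#M. poly (map_poly real_to_ac a) x) \<in> range real_to_ac"
  using assms
proof (induction "2 * (degree p + degree a) + (if degree a < degree p then 1 else 0)"
    arbitrary: p a M rule: less_induct)
  case less
  have lc: "lead_coeff p \<noteq> 0" using less.prems by simp
  have roots: "poly (map_poly real_to_ac p) x = 0" if "x \<in># M" for x
    using that less.prems(3) by (simp add: poly_prod_mset prod_mset_zero_iff)
  consider "M = {#}" | "M \<noteq> {#}" "a = 0" | "degree a = 0" "a \<noteq> 0"
    | "M \<noteq> {#}" "degree p \<le> degree a" "degree a \<noteq> 0"
    | "degree a < degree p" "degree a \<noteq> 0" "a \<noteq> 0"
    by fastforce
  then show ?case
  proof cases
    case 1
    then show ?thesis by (metis prod_mset_empty image_mset_empty real_to_ac_hom.hom_one rangeI)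
  next
    case 2
    then obtain x M' where "M = add_mset x M'" by (metis multiset_cases)
    then show ?thesis using 2 by (simp add: image_iff)
  next
    case 3
    then obtain c where a: "a = [:c:]" by (metis degree_eq_zeroE)
    have "(\<Prod>x\<in>#M. poly (map_poly real_to_ac a) x) = real_to_ac (c ^ size M)"
      by (simp add: a real_to_ac_hom.map_poly_pCons_hom prod_mset_constant hom_distribs)
    then show ?thesis by simp
  next
    case 4
    then have "degree p \<noteq> 0" using less.prems(2) by (metis size_eq_0_iff_empty)
    then have db: "degree (a mod p) < degree p" by (metis degree_0 degree_mod_less neq0_conv)
    have "map_poly real_to_ac a = map_poly real_to_ac p * map_poly real_to_ac (a div p)
        + map_poly real_to_ac (a mod p)"
      by (simp flip: hom_distribs)
    then have "poly (map_poly real_to_ac a) x = poly (map_poly real_to_ac (a mod p)) x"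
      if "x \<in># M" for x
      using roots[OF that] by simp
    then have "(\<Prod>x\<in>#M. poly (map_poly real_to_ac a) x)
        = (\<Prod>x\<in>#M. poly (map_poly real_to_ac (a mod p)) x)"
      by (intro arg_cong[where f=prod_mset] image_mset_cong) auto
    moreover have "(\<Prod>x\<in>#M. poly (map_poly real_to_ac (a mod p)) x) \<in> range real_to_ac"
      by (rule less.hyps[OF _ less.prems]) (use db 4 in auto)
    ultimately show ?thesis by simp
  next
    case 5
    obtain N where N: "size N = degree a"
      "map_poly real_to_ac a = smult (real_to_ac (lead_coeff a)) (\<Prod>x\<in>#N. [:-x,1:])"
      using alg_closed_imp_factorization[of "map_poly real_to_ac a"] 5 by auto
    have "(\<Prod>y\<in>#N. poly (map_poly real_to_ac p) y) \<in> range real_to_ac"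
      by (rule less.hyps[OF _ _ N]) (use 5 in auto)
    then show ?thesis by (rule prod_roots_poly_in_range_swap[OF less.prems(1,3) N(2)])
  qed
qed

lemma coeff_square_monic:
  fixes Q :: "'b::comm_ring_1 poly"
  assumes lc: "lead_coeff Q = 1" and k: "0 < k" "k \<le> degree Q"
  defines "m \<equiv> degree Q"
  shows "coeff (Q * Q) (2 * m - k)
    = 2 * coeff Q (m - k) + (\<Sum>i\<in>{m - k<..<m}. coeff Q i * coeff Q (2 * m - k - i))"
proof -
  define f where "f i = coeff Q i * coeff Q (2 * m - k - i)" for i
  have "coeff (Q * Q) (2 * m - k) = (\<Sum>i\<le>2 * m - k. f i)"
    by (simp add: coeff_mult f_def)
  also have "\<dots> = (\<Sum>i\<in>{m - k..m}. f i)"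
  proof (rule sum.mono_neutral_right)
    show "\<forall>i\<in>{..2 * m - k} - {m - k..m}. f i = 0"
    proof
      fix i assume i: "i \<in> {..2 * m - k} - {m - k..m}"
      then have "m < i \<or> m < 2 * m - k - i" using k by (auto simp: m_def)
      then show "f i = 0" by (auto simp: f_def coeff_eq_0 m_def)
    qed
  qed (use k in \<open>auto simp: m_def\<close>)
  also have "{m - k..m} = insert (m - k) (insert m {m - k<..<m})"
    using k by (auto simp: m_def)
  also have "(\<Sum>i\<in>insert (m - k) (insert m {m - k<..<m}). f i)
      = f (m - k) + f m + (\<Sum>i\<in>{m - k<..<m}. f i)"
    using k by (subst sum.insert; auto simp: m_def)+
  also have "f (m - k) + f m = 2 * coeff Q (m - k)"
    using k lc by (simp add: f_def m_def)
  finally show ?thesis by (simp add: f_def)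
qed

text \<open>Solve \<open>Q\<^sup>2 = S\<close> for the coefficients of \<open>Q\<close> from the top down; each new coefficient
  is half of a coefficient of \<open>S\<close> minus products of coefficients already known to lie in \<open>R\<close>.\<close>
lemma monic_poly_in_range_if_square_in_range:
  fixes Q :: "'a::linordered_field cpx alg_closure poly"
  assumes lc: "lead_coeff Q = 1" and QQ: "Q * Q \<in> range (map_poly real_to_ac)"
  shows "Q \<in> range (map_poly real_to_ac)"
proof -
  define m where "m = degree Q"
  have two: "(2 :: 'a cpx alg_closure) \<noteq> 0"
    by (metis real_to_ac_hom.hom_numeral real_to_ac_hom.hom_0_iff zero_neq_numeral)
  have top: "k \<le> m \<Longrightarrow> coeff Q (m - k) \<in> range real_to_ac" for k
  proof (induction k rule: less_induct)
    case (less k)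
    show ?case
    proof (cases "k = 0")
      case True
      then show ?thesis using lc by (metis m_def diff_zero real_to_ac_hom.hom_one rangeI)
    next
      case False
      have "(\<Sum>i\<in>{m - k<..<m}. coeff Q i * coeff Q (2 * m - k - i)) \<in> range real_to_ac"
      proof (intro sum_in_range_real_to_ac ballI)
        fix i assume i: "i \<in> {m - k<..<m}"
        have "coeff Q (m - (m - i)) \<in> range real_to_ac"
          using i less by (intro less.IH) auto
        moreover have "coeff Q (m - (i + k - m)) \<in> range real_to_ac"
          using i less by (intro less.IH) auto
        moreover have "m - (m - i) = i" "m - (i + k - m) = 2 * m - k - i" using i less by auto
        ultimately show "coeff Q i * coeff Q (2 * m - k - i) \<in> range real_to_ac"
          by (metis (no_types, lifting) real_to_ac_hom.hom_mult image_iff rangeI)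
      qed
      then obtain v where v: "(\<Sum>i\<in>{m - k<..<m}. coeff Q i * coeff Q (2 * m - k - i)) = real_to_ac v"
        by blast
      obtain u where u: "coeff (Q * Q) (2 * m - k) = real_to_ac u"
        using QQ by (auto simp: coeff_map_poly)
      have "coeff Q (m - k) = (real_to_ac u - real_to_ac v) / 2"
        using coeff_square_monic[OF lc _ less.prems[unfolded m_def]] False u v two
        by (simp add: m_def field_simps)
      also have "\<dots> = real_to_ac ((u - v) / 2)" by (simp add: hom_distribs)
      finally show ?thesis by (metis rangeI)
    qed
  qed
  have "coeff Q i \<in> range real_to_ac" for i
  proof (cases "i \<le> m")
    case True
    then show ?thesis using top[of "m - i"] by simp
  next
    case False
    then show ?thesis by (metis coeff_eq_0 m_def not_le_imp_less real_to_ac_hom.hom_zero rangeI)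
  qed
  then show ?thesis by (simp add: poly_in_range_if_coeffs_in_range)
qed

definition index_pairs :: "nat \<Rightarrow> (nat \<times> nat) set" where
  "index_pairs n = {(i, j). i < j \<and> j < n}"

lemma finite_index_pairs [simp]: "finite (index_pairs n)"
  unfolding index_pairs_def by (rule finite_subset[of _ "{..<n} \<times> {..<n}"]) auto

lemma index_pairs_Suc:
  "index_pairs (Suc n) = index_pairs n \<union> (\<lambda>i. (i, n)) ` {..<n}"
  "index_pairs n \<inter> (\<lambda>i. (i, n)) ` {..<n} = {}"
  by (auto simp: index_pairs_def)

lemma card_index_pairs: "2 * card (index_pairs n) = n * (n - 1)"
proof (induction n)
  case (Suc n)
  have "card (index_pairs (Suc n)) = card (index_pairs n) + n"
    by (simp add: index_pairs_Suc card_Un_disjoint card_image inj_on_def)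
  with Suc show ?case by (cases n) (simp_all add: algebra_simps)
qed (simp add: index_pairs_def)

lemma prod_index_pairs_Suc:
  "(\<Prod>(i, j)\<in>index_pairs (Suc n). g i j) = (\<Prod>(i, j)\<in>index_pairs n. g i j) * (\<Prod>i<n. g i n)"
  by (simp add: index_pairs_Suc prod.union_disjoint prod.reindex inj_on_def)

lemma prod_square_index_pairs:
  fixes g :: "nat \<Rightarrow> nat \<Rightarrow> 'b::comm_monoid_mult"
  assumes sym: "\<And>i j. g i j = g j i"
  shows "(\<Prod>i<n. \<Prod>j<n. g i j) = (\<Prod>i<n. g i i) * (\<Prod>(i, j)\<in>index_pairs n. g i j)\<^sup>2"
proof (induction n)
  case 0
  then show ?case by (simp add: index_pairs_def)
next
  case (Suc n)
  have "(\<Prod>i<Suc n. \<Prod>j<Suc n. g i j)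
      = (\<Prod>i<n. \<Prod>j<n. g i j) * (\<Prod>i<n. g i n) * (\<Prod>j<n. g n j) * g n n"
    by (simp add: prod.distrib mult_ac)
  also have "(\<Prod>j<n. g n j) = (\<Prod>i<n. g i n)" by (simp add: sym)
  finally show ?case
    by (simp add: Suc.IH prod_index_pairs_Suc power2_eq_square mult_ac)
qed

lemma laplace_column_in_range:
  fixes p :: "'a::linordered_field poly" and c x :: 'a and r :: "nat \<Rightarrow> 'a cpx alg_closure"
  assumes p: "p \<noteq> 0"
    and roots: "\<And>v. poly (map_poly real_to_ac p) v = real_to_ac (lead_coeff p) * (\<Prod>i<n. v - r i)"
  shows "(\<Prod>j<n. [:real_to_ac x - r j, - 1 - real_to_ac c * r j:]) \<in> range (map_poly real_to_ac)"
proof (rule poly_in_range_if_values_in_range)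
  have "finite {y. 1 + c * y = 0}"
    by (rule finite_subset[of _ "{- 1 / c}"]) (cases "c = 0", auto simp: field_simps)
  then show "infinite {y. 1 + c * y \<noteq> 0}"
    using infinite_UNIV_char_0 by (metis Diff_infinite_finite Compl_eq_Diff_UNIV Collect_neg_eq)
  show "\<forall>y\<in>{y. 1 + c * y \<noteq> 0}.
      poly (\<Prod>j<n. [:real_to_ac x - r j, - 1 - real_to_ac c * r j:]) (real_to_ac y) \<in> range real_to_ac"
  proof
    fix y assume "y \<in> {y. 1 + c * y \<noteq> 0}"
    then have y: "1 + c * y \<noteq> 0" by simp
    define \<alpha> where "\<alpha> = (x - y) / (1 + c * y)"
    have "real_to_ac (1 + c * y) * real_to_ac \<alpha> = real_to_ac x - real_to_ac y"
      using y by (simp add: \<alpha>_def flip: hom_distribs)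
    then have "poly (\<Prod>j<n. [:real_to_ac x - r j, - 1 - real_to_ac c * r j:]) (real_to_ac y)
        = (\<Prod>j<n. real_to_ac (1 + c * y) * (real_to_ac \<alpha> - r j))"
      unfolding poly_prod by (intro prod.cong) (simp_all add: algebra_simps hom_distribs)
    also have "\<dots> = real_to_ac ((1 + c * y) ^ n * (poly p \<alpha> / lead_coeff p))"
      using p roots[of "real_to_ac \<alpha>"] by (simp add: prod.distrib hom_distribs)
    finally show "poly (\<Prod>j<n. [:real_to_ac x - r j, - 1 - real_to_ac c * r j:]) (real_to_ac y)
        \<in> range real_to_ac"
      by (metis rangeI)
  qed
qed

text \<open>Its square times the diagonal factor \<open>i = j\<close> is the product over
  all \<open>i, j\<close>, whose values at points of \<open>R\<close> are products of real polynomials over the roots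
  of \<open>p\<close>.\<close>
lemma laplace_resolvent_in_range:
  fixes p :: "'a::linordered_field poly" and c :: 'a and r :: "nat \<Rightarrow> 'a cpx alg_closure"
  assumes p: "p \<noteq> 0"
    and roots: "\<And>v. poly (map_poly real_to_ac p) v = real_to_ac (lead_coeff p) * (\<Prod>i<n. v - r i)"
    and norm: "\<And>a. (\<Prod>i<n. poly (map_poly real_to_ac a) (r i)) \<in> range real_to_ac"
  defines "\<rho> \<equiv> \<lambda>i j. r i + r j + real_to_ac c * r i * r j"
  shows "(\<Prod>(i, j)\<in>index_pairs n. [:- \<rho> i j, 1:]) \<in> range (map_poly real_to_ac)"
proof -
  define B where "B x = (\<Prod>j<n. [:real_to_ac x - r j, - 1 - real_to_ac c * r j:])" for x
  define \<Phi> where "\<Phi> = (\<Prod>i<n. \<Prod>j<n. [:- \<rho> i j, 1:])"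
  have \<Phi>: "\<Phi> \<in> range (map_poly real_to_ac)"
  proof (rule poly_in_range_if_values_in_range[OF infinite_UNIV_char_0], rule ballI)
    fix x :: 'a
    obtain b where b: "B x = map_poly real_to_ac b"
      using laplace_column_in_range[OF p roots, where c = c and x = x] unfolding B_def by blast
    have eq: "poly [:- \<rho> i j, 1:] (real_to_ac x)
        = poly [:real_to_ac x - r j, - 1 - real_to_ac c * r j:] (r i)" for i j
      by (simp add: \<rho>_def algebra_simps)
    have "poly \<Phi> (real_to_ac x) = (\<Prod>i<n. poly (B x) (r i))"
      unfolding \<Phi>_def B_def poly_prod by (simp only: eq)
    then show "poly \<Phi> (real_to_ac x) \<in> range real_to_ac" using norm[of b] by (simp add: b)
  qed
  define D where "D = (\<Prod>i<n. [:- \<rho> i i, 1:])"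
  have D: "D \<in> range (map_poly real_to_ac)"
  proof (rule poly_in_range_if_values_in_range[OF infinite_UNIV_char_0], rule ballI)
    fix x :: 'a
    have eq: "poly [:- \<rho> i i, 1:] (real_to_ac x)
        = poly (map_poly real_to_ac [:x, -2, -c:]) (r i)" for i
      by (simp add: \<rho>_def algebra_simps real_to_ac_hom.map_poly_pCons_hom hom_distribs)
    show "poly D (real_to_ac x) \<in> range real_to_ac"
      unfolding D_def poly_prod eq by (rule norm)
  qed
  define Q where "Q = (\<Prod>(i, j)\<in>index_pairs n. [:- \<rho> i j, 1:])"
  have "\<Phi> = D * (Q * Q)"
    unfolding \<Phi>_def D_def Q_def
    by (subst prod_square_index_pairs) (simp_all add: \<rho>_def algebra_simps power2_eq_square)
  moreover have "D \<noteq> 0" unfolding D_def by (simp add: prod_zero_iff)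
  ultimately have "Q * Q = \<Phi> div D" by simp
  moreover obtain \<phi> d where "\<Phi> = map_poly real_to_ac \<phi>" "D = map_poly real_to_ac d"
    using \<Phi> D by blast
  ultimately have "Q * Q = map_poly real_to_ac (\<phi> div d)"
    by (simp add: real_to_ac_hom.map_poly_div)
  then have "Q * Q \<in> range (map_poly real_to_ac)" by blast
  moreover have "lead_coeff Q = 1" unfolding Q_def by (simp add: lead_coeff_prod case_prod_unfold)
  ultimately show ?thesis
    unfolding Q_def by (metis monic_poly_in_range_if_square_in_range)
qed

lemma root_in_range_if_sum_and_product_in_range:
  fixes \<alpha> \<beta> :: "'a::real_closed_field cpx alg_closure"
  assumes "\<alpha> + \<beta> \<in> range to_ac" "\<alpha> * \<beta> \<in> range to_ac"
  shows "\<alpha> \<in> range to_ac"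
proof -
  obtain s t where s: "to_ac s = \<alpha> + \<beta>" and t: "to_ac t = \<alpha> * \<beta>" using assms by fastforce
  obtain u :: "'a cpx" where u: "u * u = s * s - 4 * t" using cpx_sqrt_exists by blast
  have two: "(2::'a cpx) \<noteq> 0"
    by (metis cpx_of_real_hom.hom_numeral cpx_of_real_hom.hom_0_iff zero_neq_numeral)
  then have "(2::'a cpx alg_closure) \<noteq> 0" by (metis to_ac_numeral to_ac_eq_0_iff)
  have "(2 * \<alpha> - to_ac (s + u)) * (2 * \<alpha> - to_ac (s - u)) = 4 * (\<alpha> * \<alpha> - \<alpha> * to_ac s + to_ac t)"
    using arg_cong[OF u, of to_ac] by (simp add: algebra_simps)
  also have "\<dots> = 0" by (simp add: s t algebra_simps)
  finally have "2 * \<alpha> = to_ac (s + u) \<or> 2 * \<alpha> = to_ac (s - u)" by simp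
  then have "\<alpha> = to_ac ((s + u) / 2) \<or> \<alpha> = to_ac ((s - u) / 2)"
    using two \<open>(2::'a cpx alg_closure) \<noteq> 0\<close> by (auto simp: field_simps)
  then show ?thesis by blast
qed

lemma root_in_range_if_resolvent_values_in_range:
  fixes \<alpha> \<beta> :: "'a::real_closed_field cpx alg_closure"
  assumes "k1 \<noteq> k2"
    and "\<alpha> + \<beta> + of_nat k1 * \<alpha> * \<beta> \<in> range to_ac" "\<alpha> + \<beta> + of_nat k2 * \<alpha> * \<beta> \<in> range to_ac"
  shows "\<alpha> \<in> range to_ac"
proof -
  obtain w1 w2 where w1: "to_ac w1 = \<alpha> + \<beta> + of_nat k1 * \<alpha> * \<beta>"
    and w2: "to_ac w2 = \<alpha> + \<beta> + of_nat k2 * \<alpha> * \<beta>"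
    using assms(2,3) by (metis rangeE)
  have "(of_nat k1 :: 'a cpx alg_closure) \<noteq> of_nat k2"
    using assms(1) by (metis real_to_ac_hom.hom_of_nat real_to_ac_inj of_nat_eq_iff)
  then have prod: "\<alpha> * \<beta> = to_ac ((w1 - w2) / (of_nat k1 - of_nat k2))"
    using w1 w2 by (simp add: field_simps)
  have "\<alpha> + \<beta> = to_ac w1 - of_nat k1 * (\<alpha> * \<beta>)"
    using w1 by simp
  also have "\<dots> = to_ac (w1 - of_nat k1 * ((w1 - w2) / (of_nat k1 - of_nat k2)))"
    by (simp only: prod to_ac_diff to_ac_mult to_ac_of_nat)
  finally have "\<alpha> + \<beta> \<in> range to_ac" by blast
  moreover have "\<alpha> * \<beta> \<in> range to_ac" using prod by blast
  ultimately show ?thesis by (rule root_in_range_if_sum_and_product_in_range)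
qed

lemma pigeonhole_nat_family:
  assumes "finite A" "\<And>k::nat. \<exists>a\<in>A. P k a"
  obtains k1 k2 a where "k1 \<noteq> k2" "a \<in> A" "P k1 a" "P k2 a"
proof -
  obtain g where g: "\<And>k. g k \<in> A" "\<And>k. P k (g k)" using assms(2) by metis
  have "\<not> inj_on g {..card A}"
  proof
    assume "inj_on g {..card A}"
    then have "card {..card A} \<le> card A" by (rule card_inj_on_le) (use g assms(1) in auto)
    then show False by simp
  qed
  then obtain k1 k2 where "k1 \<noteq> k2" "g k1 = g k2" unfolding inj_on_def by blast
  then show ?thesis using that g by metis
qed

lemma prod_mset_mset_conv_nth:
  "(\<Prod>x\<in>#mset xs. f x) = (\<Prod>i<length xs. (f (xs ! i) :: 'b::comm_monoid_mult))"
  by (induction xs) (simp_all del: prod.lessThan_Suc add: prod.lessThan_Suc_shift)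

text \<open>Laplace's step: each resolvent, for \<open>c = 0, 1, 2, \<dots>\<close>, has a root \<open>r\<^sub>i + r\<^sub>j + c r\<^sub>i r\<^sub>j\<close>
  in \<open>C\<close>; two values of \<open>c\<close> give the same pair \<open>(i, j)\<close>, so \<open>r\<^sub>i + r\<^sub>j\<close> and \<open>r\<^sub>i r\<^sub>j\<close> lie in
  \<open>C\<close>, and then so does \<open>r\<^sub>i\<close>.\<close>
lemma real_poly_cpx_root_step:
  fixes p :: "'a::real_closed_field poly"
  assumes n2: "2 \<le> degree p"
    and IH: "\<And>q::'a poly. degree q = degree p * (degree p - 1) div 2 \<Longrightarrow>
               \<exists>z. poly (map_poly cpx_of_real q) z = 0"
  shows "\<exists>z. poly (map_poly cpx_of_real p) z = 0"
proof -
  define n where "n = degree p"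
  have p0: "p \<noteq> 0" using n2 by auto
  obtain M where M: "size M = degree p"
    "map_poly real_to_ac p = smult (real_to_ac (lead_coeff p)) (\<Prod>x\<in>#M. [:-x,1:])"
    using alg_closed_imp_factorization[of "map_poly real_to_ac p"] p0 by auto
  obtain rs where rs: "mset rs = M" using ex_mset by blast
  define r where "r i = rs ! i" for i
  have prod_M: "(\<Prod>x\<in>#M. f x) = (\<Prod>i<n. f (r i))" for f :: "_ \<Rightarrow> 'a cpx alg_closure"
    using M(1) by (simp add: rs[symmetric] prod_mset_mset_conv_nth r_def n_def)
  have roots: "poly (map_poly real_to_ac p) v = real_to_ac (lead_coeff p) * (\<Prod>i<n. v - r i)" for v
    by (subst M(2)) (simp add: poly_prod_mset prod_M)
  have norm: "(\<Prod>i<n. poly (map_poly real_to_ac a) (r i)) \<in> range real_to_ac" for a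
    using prod_roots_poly_in_range[OF p0 M] by (simp add: prod_M)
  define \<rho> where "\<rho> k i j = r i + r j + of_nat k * r i * r j" for k i j
  have "\<exists>ij\<in>index_pairs n. \<rho> k (fst ij) (snd ij) \<in> range to_ac" for k
  proof -
    obtain q where q: "(\<Prod>(i, j)\<in>index_pairs n. [:- \<rho> k i j, 1:]) = map_poly real_to_ac q"
      using laplace_resolvent_in_range[OF p0 roots norm, of "of_nat k"]
      by (auto simp: \<rho>_def hom_distribs)
    have "degree q = card (index_pairs n)"
      using arg_cong[OF q, of degree] by (simp add: degree_prod_eq_sum_degree case_prod_unfold)
    then have "degree q = degree p * (degree p - 1) div 2"
      using card_index_pairs[of n] by (simp add: n_def)
    then obtain z where "poly (map_poly cpx_of_real q) z = 0" using IH by blast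
    then have "poly (map_poly real_to_ac q) (to_ac z) = 0"
      by (simp add: map_poly_real_to_ac to_ac_hom.poly_map_poly)
    then have "(\<Prod>ij\<in>index_pairs n. to_ac z - \<rho> k (fst ij) (snd ij)) = 0"
      by (simp flip: q add: poly_prod case_prod_unfold)
    then show ?thesis by (simp add: prod_zero_iff) (metis eq_iff_diff_eq_0 rangeI)
  qed
  then obtain k1 k2 ij where "k1 \<noteq> k2" "ij \<in> index_pairs n"
    "\<rho> k1 (fst ij) (snd ij) \<in> range to_ac" "\<rho> k2 (fst ij) (snd ij) \<in> range to_ac"
    by (rule pigeonhole_nat_family[OF finite_index_pairs])
  then obtain z where z: "r (fst ij) = to_ac z"
    using root_in_range_if_resolvent_values_in_range unfolding \<rho>_def by blast
  have "fst ij < n" using \<open>ij \<in> index_pairs n\<close> by (auto simp: index_pairs_def)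
  then have "poly (map_poly real_to_ac p) (r (fst ij)) = 0"
    by (auto simp: roots prod_zero_iff)
  then have "to_ac (poly (map_poly cpx_of_real p) z) = 0"
    by (simp add: z map_poly_real_to_ac to_ac_hom.poly_map_poly)
  then show ?thesis by auto
qed

lemma pair_count_valuation:
  fixes n m k :: nat
  assumes n: "n = 2 ^ Suc k * m" and "odd m"
  shows "2 \<le> n" and "0 < n * (n - 1) div 2" and "\<not> 2 ^ Suc k dvd n * (n - 1) div 2"
proof -
  have "1 \<le> 2 ^ k * m" using \<open>odd m\<close> by (simp add: Suc_le_eq odd_pos)
  then show "2 \<le> n" by (simp add: n)
  then have "odd (n - 1)" using n by simp
  with \<open>odd m\<close> have odd: "odd (m * (n - 1))" by simp
  have half: "n * (n - 1) div 2 = 2 ^ k * (m * (n - 1))" using n by simp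
  have "0 < m * (n - 1)" using odd by (rule odd_pos)
  then show "0 < n * (n - 1) div 2" unfolding half by simp
  show "\<not> 2 ^ Suc k dvd n * (n - 1) div 2"
  proof
    assume "2 ^ Suc k dvd n * (n - 1) div 2"
    then have "2 ^ k * 2 dvd 2 ^ k * (m * (n - 1))" unfolding half by (simp add: mult.commute)
    then show False using odd by (simp add: nat_mult_dvd_cancel_disj)
  qed
qed

text \<open>Induction on the \<open>2\<close>-adic valuation of the degree: for degree \<open>2\<^sup>k m\<close> with \<open>m\<close> odd,
  Laplace's resolvent has degree \<open>2\<^sup>k\<^sup>-\<^sup>1 m'\<close> with \<open>m'\<close> odd.\<close>
lemma real_poly_has_cpx_root:
  fixes p :: "'a::real_closed_field poly"
  assumes "0 < degree p"
  shows "\<exists>z. poly (map_poly cpx_of_real p) z = 0"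
proof -
  have "\<exists>z. poly (map_poly cpx_of_real q) z = 0"
    if "0 < degree q" "\<not> 2 ^ Suc k dvd degree q" for k and q :: "'a poly"
    using that
  proof (induction k arbitrary: q)
    case 0
    then obtain x where "poly q x = 0" using odd_degree_poly_has_root by auto
    then have "poly (map_poly cpx_of_real q) (cpx_of_real x) = 0" by simp
    then show ?case by blast
  next
    case (Suc k)
    show ?case
    proof (cases "2 ^ Suc k dvd degree q")
      case False
      then show ?thesis using Suc by blast
    next
      case True
      then obtain m where m: "degree q = 2 ^ Suc k * m" by blast
      with Suc.prems have "odd m" by auto
      note val = pair_count_valuation[OF m this]
      show ?thesis
      proof (rule real_poly_cpx_root_step[OF val(1)])
        fix r :: "'a poly" assume "degree r = degree q * (degree q - 1) div 2"
        then show "\<exists>z. poly (map_poly cpx_of_real r) z = 0" using Suc.IH val(2,3) by simp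
      qed
    qed
  qed
  moreover have "\<not> 2 ^ Suc (degree p) dvd degree p"
  proof
    assume "2 ^ Suc (degree p) dvd degree p"
    then have "2 ^ Suc (degree p) \<le> degree p" using assms by (simp add: dvd_imp_le)
    moreover have "degree p < 2 ^ Suc (degree p)"
      using less_exp[of "degree p"] by (simp only: power_Suc)
    ultimately show False by simp
  qed
  ultimately show ?thesis using assms by blast
qed

lemma real_poly_quadratic_factor:
  fixes p :: "'a::real_closed_field poly"
  assumes root: "poly (map_poly cpx_of_real p) z = 0" and y: "Im z \<noteq> 0"
  shows "[:Re z * Re z + Im z * Im z, - 2 * Re z, 1:] dvd p"
proof -
  define m where "m = [:Re z * Re z + Im z * Im z, - 2 * Re z, 1:]"
  define r where "r = p mod m"
  have "poly (map_poly cpx_of_real m) z = 0"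
    by (simp add: m_def cpx_of_real_hom.map_poly_pCons_hom cpx_eq_iff algebra_simps)
  moreover have "map_poly cpx_of_real p
      = map_poly cpx_of_real m * map_poly cpx_of_real (p div m) + map_poly cpx_of_real r"
    by (simp add: r_def flip: hom_distribs)
  ultimately have "poly (map_poly cpx_of_real r) z = 0" using root by simp
  moreover have "degree m = 2" "m \<noteq> 0" by (simp_all add: m_def)
  then have "degree r < 2" by (metis degree_mod_less' r_def degree_0 pos2)
  then have "r = [:coeff r 0, coeff r 1:]"
    by (intro poly_eqI) (auto simp: coeff_pCons coeff_eq_0 split: nat.splits)
  ultimately have "cpx_of_real (coeff r 0) + z * cpx_of_real (coeff r 1) = 0"
    by (metis cpx_of_real_hom.map_poly_pCons_hom map_poly_0 poly_pCons poly_0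
        mult_zero_right add_0_right)
  then have "Im z * coeff r 1 = 0" "coeff r 0 + Re z * coeff r 1 = 0"
    by (auto simp: cpx_eq_iff)
  with y have "r = 0" using \<open>r = [:coeff r 0, coeff r 1:]\<close> by simp
  then show ?thesis by (simp add: r_def m_def mod_eq_0_iff_dvd)
qed

text \<open>A real polynomial is a product of linear factors and of quadratic factors without real
  roots, so it changes sign only at its roots.\<close>
lemma poly_sgn_eq_if_no_root:
  fixes p :: "'a::real_closed_field poly"
  assumes "a \<le> b" "\<And>x. a \<le> x \<Longrightarrow> x \<le> b \<Longrightarrow> poly p x \<noteq> 0"
  shows "sgn (poly p a) = sgn (poly p b)"
  using assms(2)
proof (induction "degree p" arbitrary: p rule: less_induct)
  case less
  show ?case
  proof (cases "degree p = 0")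
    case True
    then obtain c where "p = [:c:]" by (metis degree_eq_zeroE)
    then show ?thesis by simp
  next
    case False
    then obtain z where z: "poly (map_poly cpx_of_real p) z = 0" using real_poly_has_cpx_root by blast
    obtain f q where pq: "p = f * q" and f: "0 < degree f" and
      sgn_f: "sgn (poly f a) = sgn (poly f b)"
    proof (cases "Im z = 0")
      case True
      define x where "x = Re z"
      have "z = cpx_of_real x" using True by (simp add: cpx_eq_iff x_def)
      then have "poly p x = 0" using z by simp
      then obtain q where pq: "p = [:- x, 1:] * q" by (metis dvdE poly_eq_0_iff_dvd)
      have "\<not> (a \<le> x \<and> x \<le> b)" using less.prems \<open>poly p x = 0\<close> by blast
      then have "sgn (a - x) = sgn (b - x)" using assms(1) by (auto simp: sgn_if)
      then show ?thesis using that[OF pq] by simp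
    next
      case False
      define x y where "x = Re z" and "y = Im z"
      obtain q where pq: "p = [:x * x + y * y, - 2 * x, 1:] * q"
        using real_poly_quadratic_factor[OF z False] by (auto simp: x_def y_def)
      have "y * y > 0" using False
        by (cases "y > 0") (auto simp: y_def mult_neg_neg not_less less_le)
      moreover have "poly [:x * x + y * y, - 2 * x, 1:] t = (t - x) * (t - x) + y * y" for t
        by (simp add: algebra_simps)
      ultimately have "poly [:x * x + y * y, - 2 * x, 1:] t > 0" for t
        by (metis add_nonneg_pos zero_le_square)
      then show ?thesis using that[OF pq] by (simp add: sgn_pos)
    qed
    have q0: "q \<noteq> 0" using pq False by auto
    have "f \<noteq> 0" using f by auto
    then have "degree q < degree p" using pq q0 f by (simp add: degree_mult_eq)
    moreover have "\<And>t. a \<le> t \<Longrightarrow> t \<le> b \<Longrightarrow> poly q t \<noteq> 0" using less.prems pq by auto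
    ultimately have "sgn (poly q a) = sgn (poly q b)" by (rule less.hyps)
    then show ?thesis using pq sgn_f by (simp add: sgn_mult)
  qed
qed

section \<open>Multiplicities and cofactors\<close>

lemma cofactor_eqI:
  fixes R A :: "'a::field poly"
  assumes R: "R = [:-x, 1:] ^ k * A" and A: "poly A x \<noteq> 0"
  shows "order x R = k" "cofactor R x = A"
proof -
  have "A \<noteq> 0" using A by auto
  then have "order x R = order x ([:-x, 1:] ^ k) + order x A"
    using R by (simp add: order_mult)
  also have "\<dots> = k" using A by (simp add: order_power_n_n order_0I)
  finally show ok: "order x R = k" .
  have "[:-x, 1:] ^ k \<noteq> 0" by simp
  then show "cofactor R x = A"
    unfolding Defs.cofactor_def ok using R by simp
qed

lemma cofactor_decomp:
  fixes R :: "'a::field poly"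
  assumes "R \<noteq> 0"
  shows "R = [:-x, 1:] ^ order x R * cofactor R x" "poly (cofactor R x) x \<noteq> 0"
proof -
  obtain q where q: "R = [:-x, 1:] ^ order x R * q" "\<not> [:-x, 1:] dvd q"
    using order_decomp[OF assms] by blast
  then have "poly q x \<noteq> 0" by (simp add: poly_eq_0_iff_dvd)
  with q(1) have "cofactor R x = q" by (rule cofactor_eqI)
  then show "R = [:-x, 1:] ^ order x R * cofactor R x" "poly (cofactor R x) x \<noteq> 0"
    using q \<open>poly q x \<noteq> 0\<close> by auto
qed

lemma cofactor_mult:
  fixes P Q :: "'a::field poly"
  assumes "P \<noteq> 0" "Q \<noteq> 0"
  shows "cofactor (P * Q) x = cofactor P x * cofactor Q x"
proof (rule cofactor_eqI(2))
  show "P * Q = [:-x, 1:] ^ (order x P + order x Q) * (cofactor P x * cofactor Q x)"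
    using cofactor_decomp(1)[OF assms(1), of x] cofactor_decomp(1)[OF assms(2), of x]
    by (metis (no_types, lifting) mult.assoc mult.left_commute power_add)
  show "poly (cofactor P x * cofactor Q x) x \<noteq> 0"
    using cofactor_decomp(2)[OF assms(1)] cofactor_decomp(2)[OF assms(2)] by simp
qed

lemma cofactor_smult:
  fixes P :: "'a::field poly"
  assumes "c \<noteq> 0" "P \<noteq> 0"
  shows "cofactor (smult c P) x = smult c (cofactor P x)"
proof (rule cofactor_eqI(2))
  show "smult c P = [:-x, 1:] ^ order x P * smult c (cofactor P x)"
    using cofactor_decomp(1)[OF assms(2), of x] by (metis mult_smult_right)
  show "poly (smult c (cofactor P x)) x \<noteq> 0"
    using assms cofactor_decomp(2)[OF assms(2)] by simp
qed

lemma order_cofactor_add_smult: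
  fixes P Q :: "'a::field poly"
  assumes P0: "P \<noteq> 0" and Q0: "Q \<noteq> 0" and lt: "order x P < order x Q"
  shows "order x (P + smult r Q) = order x P"
    "poly (cofactor (P + smult r Q) x) x = poly (cofactor P x) x"
proof -
  define k l where "k = order x P" and "l = order x Q"
  define A where "A = cofactor P x + smult r ([:-x,1:] ^ (l - k) * cofactor Q x)"
  have "[:-x,1:] ^ l = [:-x,1:] ^ k * [:-x,1:] ^ (l - k)"
    using lt by (simp add: k_def l_def flip: power_add)
  then have dec: "P + smult r Q = [:-x,1:] ^ k * A"
    using cofactor_decomp(1)[OF P0, of x] cofactor_decomp(1)[OF Q0, of x]
    by (metis (no_types, lifting) A_def distrib_left k_def l_def mult.assoc mult_smult_right)
  have A: "poly A x = poly (cofactor P x) x"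
    using lt by (simp add: A_def k_def l_def)
  then have "poly A x \<noteq> 0" using cofactor_decomp(2)[OF P0] by simp
  then show "order x (P + smult r Q) = order x P"
    "poly (cofactor (P + smult r Q) x) x = poly (cofactor P x) x"
    using cofactor_eqI[OF dec] A by (auto simp: k_def)
qed

lemma order_le_add_smult:
  fixes P Q :: "'a::field poly"
  assumes "order x Q \<le> order x P \<or> P = 0" and "P + smult r Q \<noteq> 0"
  shows "order x Q \<le> order x (P + smult r Q)"
proof -
  have "[:-x,1:] ^ order x Q dvd P"
    using assms(1) by (metis dvd_0_right order_divides)
  moreover have "[:-x,1:] ^ order x Q dvd Q" by (simp add: order_divides)
  ultimately have "[:-x,1:] ^ order x Q dvd P + smult r Q"
    by (simp add: dvd_add dvd_smult)
  then show ?thesis using assms(2) by (simp add: order_divides)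
qed

section \<open>The Cauchy index\<close>

text \<open>The signs of \<open>R\<close> immediately to the right and to the left of \<open>x\<close>.\<close>
definition sgn_right :: "'a::linordered_field poly \<Rightarrow> 'a \<Rightarrow> 'a" where
  "sgn_right R x = sgn (poly (cofactor R x) x)"

definition sgn_left :: "'a::linordered_field poly \<Rightarrow> 'a \<Rightarrow> 'a" where
  "sgn_left R x = (-1) ^ order x R * sgn_right R x"

text \<open>The sign of \<open>P/Q\<close> at \<open>x\<close> if this value is finite and non-zero, and \<open>0\<close> otherwise.\<close>
definition sgn_ratio :: "'a::linordered_field poly \<Rightarrow> 'a poly \<Rightarrow> 'a \<Rightarrow> 'a" where
  "sgn_ratio P Q x = (if P \<noteq> 0 \<and> Q \<noteq> 0 \<and> val_at P Q x = 0
     then sgn (poly (cofactor P x) x * poly (cofactor Q x) x) else 0)"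

lemma sgn_right_eq_sgn_poly:
  fixes R :: "'a::real_closed_field poly"
  assumes "R \<noteq> 0" "a < t" "\<And>s. a < s \<Longrightarrow> s \<le> t \<Longrightarrow> poly R s \<noteq> 0"
  shows "sgn (poly R t) = sgn_right R a"
proof -
  define A k where "A = cofactor R a" and "k = order a R"
  have RA: "R = [:-a, 1:] ^ k * A" and "poly A a \<noteq> 0"
    using cofactor_decomp[OF assms(1), of a] by (simp_all add: A_def k_def)
  then have "poly A s \<noteq> 0" if "a \<le> s" "s \<le> t" for s
    using assms(3)[of s] that by (cases "s = a") auto
  then have "sgn (poly A a) = sgn (poly A t)"
    using poly_sgn_eq_if_no_root[of a t A] assms(2) by auto
  have "sgn (poly R t) = sgn (t - a) ^ k * sgn (poly A t)"
    by (subst RA) (simp add: sgn_mult power_sgn)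
  also have "\<dots> = sgn_right R a"
    using \<open>sgn (poly A a) = sgn (poly A t)\<close> assms(2) by (simp add: sgn_right_def A_def)
  finally show ?thesis .
qed

lemma sgn_left_eq_sgn_poly:
  fixes R :: "'a::real_closed_field poly"
  assumes "R \<noteq> 0" "t < b" "\<And>s. t \<le> s \<Longrightarrow> s < b \<Longrightarrow> poly R s \<noteq> 0"
  shows "sgn (poly R t) = sgn_left R b"
proof -
  define B l where "B = cofactor R b" and "l = order b R"
  have RB: "R = [:-b, 1:] ^ l * B" and "poly B b \<noteq> 0"
    using cofactor_decomp[OF assms(1), of b] by (simp_all add: B_def l_def)
  then have "poly B s \<noteq> 0" if "t \<le> s" "s \<le> b" for s
    using assms(3)[of s] that by (cases "s = b") auto
  then have "sgn (poly B t) = sgn (poly B b)"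
    using poly_sgn_eq_if_no_root[of t b B] assms(2) by auto
  have "sgn (poly R t) = sgn (t - b) ^ l * sgn (poly B t)"
    by (subst RB) (simp add: sgn_mult power_sgn)
  also have "\<dots> = sgn_left R b"
    using \<open>sgn (poly B t) = sgn (poly B b)\<close> assms(2)
    by (simp add: sgn_left_def sgn_right_def B_def l_def)
  finally show ?thesis .
qed

lemma sgn_right_eq_sgn_left_if_no_root:
  fixes R :: "'a::real_closed_field poly"
  assumes "R \<noteq> 0" "a < b" "\<And>t. a < t \<Longrightarrow> t < b \<Longrightarrow> poly R t \<noteq> 0"
  shows "sgn_right R a = sgn_left R b"
proof -
  define m where "m = (a + b) / 2"
  have "a < m" "m < b" using assms(2) by (simp_all add: m_def field_simps)
  then show ?thesis
    using sgn_right_eq_sgn_poly[OF assms(1), of a m] sgn_left_eq_sgn_poly[OF assms(1), of m b]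
      assms(3) by force
qed

lemma sum_sgn_jumps:
  fixes R :: "'a::real_closed_field poly"
  assumes "R \<noteq> 0"
  shows "a < b \<Longrightarrow> (\<Sum>x\<in>{x. a < x \<and> x < b \<and> poly R x = 0}. sgn_right R x - sgn_left R x)
    = sgn_left R b - sgn_right R a"
proof (induction "card {x. a < x \<and> x < b \<and> poly R x = 0}" arbitrary: b rule: less_induct)
  case (less b)
  define Z where "Z = {x. a < x \<and> x < b \<and> poly R x = 0}"
  have finZ: "finite Z"
    unfolding Z_def using poly_roots_finite[OF assms] by (rule rev_finite_subset) auto
  show ?case
  proof (cases "Z = {}")
    case True
    have "sgn_right R a = sgn_left R b"
      using True by (intro sgn_right_eq_sgn_left_if_no_root[OF assms less.prems]) (auto simp: Z_def)
    then show ?thesis using True by (simp flip: Z_def)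
  next
    case False
    define x where "x = Max Z"
    have xZ: "x \<in> Z" and xmax: "\<And>t. t \<in> Z \<Longrightarrow> t \<le> x"
      using finZ False by (simp_all add: x_def)
    have ax: "a < x" "x < b" using xZ by (auto simp: Z_def)
    have Zx: "{t. a < t \<and> t < x \<and> poly R t = 0} = Z - {x}"
      using xmax ax by (auto simp: Z_def) (meson le_less)
    then have "card {t. a < t \<and> t < x \<and> poly R t = 0} < card Z"
      using finZ xZ by (metis card_Diff1_less)
    then have IH: "(\<Sum>t\<in>Z - {x}. sgn_right R t - sgn_left R t) = sgn_left R x - sgn_right R a"
      using less.hyps[of x] ax Zx by (simp add: Z_def)
    have "poly R t \<noteq> 0" if "x < t" "t < b" for t
      using xmax[of t] that ax by (force simp: Z_def)
    then have "sgn_right R x = sgn_left R b"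
      using ax by (intro sgn_right_eq_sgn_left_if_no_root[OF assms])
    with IH show ?thesis
      using finZ xZ by (simp add: sum.remove flip: Z_def)
  qed
qed

lemma minus_one_powi_diff: "(-1::'a::field) powi (int a - int b) = (-1) ^ (a + b)"
proof -
  have "(-1::'a) powi (int a - int b) = (-1) ^ a / (-1) ^ b"
    by (simp add: power_int_diff)
  also have "\<dots> = (-1) ^ a * (-1) ^ b"
    by (cases "even b") simp_all
  finally show ?thesis by (simp add: power_add)
qed

lemma ind_plus_swap:
  fixes P Q :: "'a::linordered_field poly"
  assumes "P \<noteq> 0" "Q \<noteq> 0"
  shows "ind_plus P Q x + ind_plus Q P x = (sgn_right (P * Q) x - sgn_ratio P Q x) / 2"
proof -
  have "val_at Q P x = - val_at P Q x" by (simp add: val_at_def)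
  moreover have "sgn_right (P * Q) x = sgn (poly (cofactor P x) x * poly (cofactor Q x) x)"
    by (simp add: sgn_right_def cofactor_mult assms)
  ultimately show ?thesis
    using assms by (cases "val_at P Q x" "0::int" rule: linorder_cases)
      (auto simp: ind_plus_def sgn_ratio_def mult.commute)
qed

lemma ind_minus_swap:
  fixes P Q :: "'a::linordered_field poly"
  assumes "P \<noteq> 0" "Q \<noteq> 0"
  shows "ind_minus P Q x + ind_minus Q P x = (sgn_left (P * Q) x - sgn_ratio P Q x) / 2"
proof -
  define s where "s = sgn (poly (cofactor P x) x * poly (cofactor Q x) x)"
  have vQP: "val_at Q P x = - val_at P Q x" by (simp add: val_at_def)
  have left: "sgn_left (P * Q) x = (-1) ^ (order x P + order x Q) * s"
    by (simp add: sgn_left_def sgn_right_def s_def cofactor_mult order_mult assms)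
  have p1: "(-1::'a) powi val_at P Q x = (-1) ^ (order x P + order x Q)"
    by (simp add: val_at_def minus_one_powi_diff)
  have p2: "(-1::'a) powi val_at Q P x = (-1) ^ (order x P + order x Q)"
    by (simp add: val_at_def minus_one_powi_diff add.commute)
  consider "val_at P Q x < 0" | "val_at P Q x = 0" | "val_at P Q x > 0" by linarith
  then show ?thesis
  proof cases
    case 2
    then have "order x P = order x Q" by (simp add: val_at_def)
    then have "(-1::'a) ^ (order x P + order x Q) = 1" by (simp flip: mult_2)
    then show ?thesis using assms 2 left
      by (simp add: ind_minus_def sgn_ratio_def vQP s_def)
  qed (use assms vQP left p1 p2 in \<open>auto simp: ind_minus_def sgn_ratio_def s_def mult.commute\<close>)
qed

lemma ind_at_nonzeroD:
  fixes P Q :: "'a::linordered_field poly"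
  assumes "ind_at P Q x \<noteq> 0"
  shows "poly (P * Q) x = 0"
proof -
  have "Q \<noteq> 0 \<and> val_at P Q x < 0"
    using assms by (auto simp: ind_at_def ind_plus_def ind_minus_def split: if_splits)
  then have "order x Q > 0" by (simp add: val_at_def)
  then show ?thesis by (simp add: order_root)
qed

text \<open>The inversion formula for the Cauchy index. Real closedness enters through the fact that
  the sign of \<open>PQ\<close> is constant between consecutive roots.\<close>
lemma ind_lt_swap:
  fixes P Q :: "'a::real_closed_field poly"
  assumes P0: "P \<noteq> 0" and Q0: "Q \<noteq> 0" and ab: "a < b"
  shows "ind_lt a b P Q + ind_lt a b Q P = (sgn_ratio P Q b - sgn_ratio P Q a) / 2"
proof -
  define R where "R = P * Q"
  have R0: "R \<noteq> 0" using P0 Q0 by (simp add: R_def)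
  define Z where "Z = {x. a < x \<and> x < b \<and> poly R x = 0}"
  have finZ: "finite Z"
    unfolding Z_def using poly_roots_finite[OF R0] by (rule rev_finite_subset) auto
  have sum_Z: "(\<Sum>x\<in>{x. a < x \<and> x < b \<and> ind_at S T x \<noteq> 0}. ind_at S T x) = (\<Sum>x\<in>Z. ind_at S T x)"
    if "S * T = R" for S T
    using that by (intro sum.mono_neutral_left[OF finZ]) (auto simp: Z_def dest: ind_at_nonzeroD)
  have "ind_lt a b P Q + ind_lt a b Q P =
      (ind_plus P Q a + ind_plus Q P a) + (\<Sum>x\<in>Z. ind_at P Q x + ind_at Q P x)
      - (ind_minus P Q b + ind_minus Q P b)"
    by (simp add: ind_lt_def sum_Z R_def mult.commute sum.distrib)
  also have "\<dots> = (sgn_right R a - sgn_ratio P Q a) / 2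
      + (\<Sum>x\<in>Z. (sgn_right R x - sgn_left R x) / 2) - (sgn_left R b - sgn_ratio P Q b) / 2"
  proof -
    have "ind_at P Q x + ind_at Q P x = (sgn_right R x - sgn_left R x) / 2" for x
      using ind_plus_swap[OF P0 Q0, of x] ind_minus_swap[OF P0 Q0, of x]
      by (simp add: ind_at_def R_def field_simps)
    then show ?thesis by (simp only: ind_plus_swap[OF P0 Q0] ind_minus_swap[OF P0 Q0] R_def)
  qed
  also have "(\<Sum>x\<in>Z. (sgn_right R x - sgn_left R x) / 2) = (sgn_left R b - sgn_right R a) / 2"
    using sum_sgn_jumps[OF R0 ab] by (simp add: Z_def flip: sum_divide_distrib)
  finally show ?thesis by (simp add: field_simps)
qed

lemma ind_zero [simp]:
  "ind_plus 0 Q x = 0" "ind_plus P 0 x = 0" "ind_minus 0 Q x = 0" "ind_minus P 0 x = 0"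
  by (simp_all add: ind_plus_def ind_minus_def)

lemma ind_lt_zero [simp]: "ind_lt a b 0 Q = 0" "ind_lt a b P 0 = 0"
  by (simp_all add: ind_lt_def ind_at_def)

lemma ind_add_smult:
  fixes P Q :: "'a::linordered_field poly"
  shows "ind_plus (P + smult r Q) Q x = ind_plus P Q x"
    "ind_minus (P + smult r Q) Q x = ind_minus P Q x"
proof -
  have "ind_plus (P + smult r Q) Q x = ind_plus P Q x
      \<and> ind_minus (P + smult r Q) Q x = ind_minus P Q x"
  proof (cases "Q \<noteq> 0 \<and> P \<noteq> 0 \<and> order x P < order x Q")
    case True
    then have "P + smult r Q \<noteq> 0"
      using order_cofactor_add_smult(2)[of P Q x r] cofactor_decomp(2)[of P x]
      by (auto simp: Defs.cofactor_def)
    with True show ?thesis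
      using order_cofactor_add_smult[of P Q x r]
      by (simp add: ind_plus_def ind_minus_def val_at_def)
  next
    case False
    have "order x Q \<le> order x (P + smult r Q)" if "Q \<noteq> 0" "P + smult r Q \<noteq> 0"
      using False that order_le_add_smult[of x Q P r] by auto
    with False show ?thesis
      by (auto simp: ind_plus_def ind_minus_def val_at_def)
  qed
  then show "ind_plus (P + smult r Q) Q x = ind_plus P Q x"
    "ind_minus (P + smult r Q) Q x = ind_minus P Q x" by auto
qed

lemma ind_smult:
  fixes P Q :: "'a::linordered_field poly"
  assumes "c \<noteq> 0" "d \<noteq> 0"
  shows "ind_plus (smult c P) (smult d Q) x = sgn c * sgn d * ind_plus P Q x"
    "ind_minus (smult c P) (smult d Q) x = sgn c * sgn d * ind_minus P Q x"
proof -
  have "val_at (smult c P) (smult d Q) x = val_at P Q x"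
    using assms by (simp add: val_at_def order_smult)
  with assms show "ind_plus (smult c P) (smult d Q) x = sgn c * sgn d * ind_plus P Q x"
    "ind_minus (smult c P) (smult d Q) x = sgn c * sgn d * ind_minus P Q x"
    by (auto simp: ind_plus_def ind_minus_def cofactor_smult sgn_mult algebra_simps)
qed

lemma ind_lt_cong_scaled:
  fixes P Q P' Q' :: "'a::linordered_field poly"
  assumes "k \<noteq> 0"
    and "\<And>x. ind_plus P' Q' x = k * ind_plus P Q x"
    and "\<And>x. ind_minus P' Q' x = k * ind_minus P Q x"
  shows "ind_lt a b P' Q' = k * ind_lt a b P Q"
proof -
  have ind_at: "ind_at P' Q' x = k * ind_at P Q x" for x
    by (simp add: ind_at_def assms(2,3) algebra_simps)
  then have "{x. a < x \<and> x < b \<and> ind_at P' Q' x \<noteq> 0} = {x. a < x \<and> x < b \<and> ind_at P Q x \<noteq> 0}"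
    using assms(1) by auto
  then show ?thesis
    by (simp add: ind_lt_def ind_at assms(2,3) sum_distrib_left algebra_simps)
qed

lemma ind_lt_add_smult: "ind_lt a b (P + smult r Q) Q = ind_lt a b P Q"
  using ind_lt_cong_scaled[of 1 "P + smult r Q" Q P] by (simp add: ind_add_smult)

lemma ind_lt_smult:
  fixes P Q :: "'a::linordered_field poly"
  assumes "c \<noteq> 0" "d \<noteq> 0"
  shows "ind_lt a b (smult c P) (smult d Q) = sgn c * sgn d * ind_lt a b P Q"
  using assms by (intro ind_lt_cong_scaled) (simp_all add: ind_smult sgn_0_0)

text \<open>The pair consists of the real and imaginary parts of \<open>(\<alpha> + i\<beta>)(P + iQ)\<close>. With
  \<open>S = P + (\<alpha>/\<beta>)Q\<close> it is \<open>(-kQ, \<beta>S)\<close> up to adding a multiple of \<open>\<beta>S\<close> to the first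
  component, where \<open>k = (\<alpha>\<^sup>2 + \<beta>\<^sup>2)/\<beta>\<close> has the sign of \<open>\<beta>\<close>.\<close>
lemma ind_lt_rotate:
  fixes P Q :: "'a::real_closed_field poly" and \<alpha> \<beta> :: 'a
  assumes \<beta>: "\<beta> \<noteq> 0" and ab: "a < b"
  defines "S \<equiv> P + smult (\<alpha> / \<beta>) Q"
  shows "ind_lt a b (smult \<alpha> P - smult \<beta> Q) (smult \<beta> P + smult \<alpha> Q)
    = ind_lt a b P Q - (sgn_ratio Q S b - sgn_ratio Q S a) / 2"
proof -
  define k where "k = (\<alpha> * \<alpha> + \<beta> * \<beta>) / \<beta>"
  have "\<beta> * \<beta> > 0" using \<beta> by (cases "\<beta> > 0") (auto simp: mult_neg_neg not_less less_le)
  then have "\<alpha> * \<alpha> + \<beta> * \<beta> > 0" by (metis add_nonneg_pos zero_le_square)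
  then have k: "sgn (- k) * sgn \<beta> = -1"
    using \<beta> by (cases "\<beta> > 0") (auto simp: k_def sgn_if divide_pos_neg not_less)
  have e1: "smult \<alpha> P - smult \<beta> Q = smult (- k) Q + smult (\<alpha> / \<beta>) (smult \<beta> S)"
    by (rule poly_eqI) (simp add: S_def k_def field_simps \<beta>)
  have e2: "smult \<beta> P + smult \<alpha> Q = smult \<beta> S"
    by (rule poly_eqI) (simp add: S_def field_simps \<beta>)
  have "- k \<noteq> 0" using k by auto
  have "ind_lt a b (smult \<alpha> P - smult \<beta> Q) (smult \<beta> P + smult \<alpha> Q)
      = ind_lt a b (smult (- k) Q) (smult \<beta> S)"
    by (simp only: e1 e2 ind_lt_add_smult)
  also have "\<dots> = - ind_lt a b Q S"
    using ind_lt_smult[OF \<open>- k \<noteq> 0\<close> \<beta>] k by simp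
  finally have rotated: "ind_lt a b (smult \<alpha> P - smult \<beta> Q) (smult \<beta> P + smult \<alpha> Q)
    = - ind_lt a b Q S" .
  have shifted: "ind_lt a b P Q = ind_lt a b S Q" by (simp add: S_def ind_lt_add_smult)
  show ?thesis
  proof (cases "Q = 0 \<or> S = 0")
    case True
    then show ?thesis using rotated shifted by (auto simp: sgn_ratio_def)
  next
    case False
    then show ?thesis using rotated shifted ind_lt_swap[of Q S, OF _ _ ab] by (simp add: field_simps)
  qed
qed

section \<open>Edges and vertices of the rectangle\<close>

lemma coeff_re_poly [simp]: "coeff (re_poly H) n = Re (coeff H n)"
  by (simp add: re_poly_def coeff_map_poly)

lemma coeff_im_poly [simp]: "coeff (im_poly H) n = Im (coeff H n)"
  by (simp add: im_poly_def coeff_map_poly)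

lemma re_poly_smult: "re_poly (smult g H) = smult (Re g) (re_poly H) - smult (Im g) (im_poly H)"
  by (rule poly_eqI) simp

lemma im_poly_smult: "im_poly (smult g H) = smult (Im g) (re_poly H) + smult (Re g) (im_poly H)"
  by (rule poly_eqI) (simp add: algebra_simps)

lemma poly_re_poly: "poly (re_poly H) x = Re (poly H (cpx_of_real x))"
  and poly_im_poly: "poly (im_poly H) x = Im (poly H (cpx_of_real x))"
  by (induction H) (simp_all add: re_poly_def im_poly_def map_poly_pCons)

lemma re_im_poly_mult_real:
  fixes A :: "'a::linordered_field poly"
  shows "re_poly (map_poly cpx_of_real A * B) = A * re_poly B"
    and "im_poly (map_poly cpx_of_real A * B) = A * im_poly B"
  by (induction A) (simp_all add: cpx_of_real_poly.map_poly_pCons_hom poly_eq_iff coeff_pCons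
      algebra_simps split: nat.splits)

lemma restr_h_smult: "restr_h (smult \<gamma> F) y = smult \<gamma> (restr_h F y)"
  and restr_v_smult: "restr_v (smult \<gamma> F) x = smult \<gamma> (restr_v F x)"
  and edge_prod_smult: "edge_prod (smult \<gamma> A) B = smult \<gamma> (edge_prod A B)"
  by (simp_all add: restr_h_def restr_v_def edge_prod_def pcompose_smult)

text \<open>For \<open>\<gamma> = \<alpha> + i\<beta>\<close> with \<open>\<beta> \<noteq> 0\<close> and \<open>r = \<alpha> / \<beta>\<close>, the boundary terms by which
  multiplication with \<open>\<gamma>\<close> changes the Cauchy index of \<open>(Re H, Im H)\<close>.\<close>
definition rotation_sgn :: "'a::linordered_field \<Rightarrow> 'a cpx poly \<Rightarrow> 'a \<Rightarrow> 'a" where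
  "rotation_sgn r H t = sgn_ratio (im_poly H) (re_poly H + smult r (im_poly H)) t"

lemma cind_smult_real:
  fixes H :: "'a::linordered_field cpx poly"
  assumes "\<gamma> \<noteq> 0" "Im \<gamma> = 0"
  shows "cind a b (re_poly (smult \<gamma> H)) (im_poly (smult \<gamma> H)) = cind a b (re_poly H) (im_poly H)"
proof -
  have "Re \<gamma> \<noteq> 0" using assms by (auto simp: cpx_eq_iff)
  then have "sgn (Re \<gamma>) * sgn (Re \<gamma>) = 1" by (simp add: sgn_if)
  then show ?thesis
    using ind_lt_smult[OF \<open>Re \<gamma> \<noteq> 0\<close> \<open>Re \<gamma> \<noteq> 0\<close>] assms(2)
    by (simp add: cind_def re_poly_smult im_poly_smult)
qed

lemma cind_smult_rotate:
  fixes H :: "'a::real_closed_field cpx poly"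
  assumes "Im \<gamma> \<noteq> 0"
  shows "cind a b (re_poly (smult \<gamma> H)) (im_poly (smult \<gamma> H))
    = cind a b (re_poly H) (im_poly H)
      - (rotation_sgn (Re \<gamma> / Im \<gamma>) H b - rotation_sgn (Re \<gamma> / Im \<gamma>) H a) / 2"
proof (cases a b rule: linorder_cases)
  case less
  then show ?thesis
    using ind_lt_rotate[OF assms less, where P = "re_poly H" and Q = "im_poly H" and \<alpha> = "Re \<gamma>"]
    by (simp add: cind_def re_poly_smult im_poly_smult rotation_sgn_def)
next
  case greater
  then show ?thesis
    using ind_lt_rotate[OF assms greater, where P = "re_poly H" and Q = "im_poly H" and \<alpha> = "Re \<gamma>"]
    by (simp add: cind_def re_poly_smult im_poly_smult rotation_sgn_def field_simps)
qed (simp add: cind_def)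

lemma sgn_ratio_common_factor:
  fixes P Q :: "'a::linordered_field poly"
  assumes "poly P x \<noteq> 0 \<or> poly Q x \<noteq> 0"
  shows "sgn_ratio ([:-x, 1:] ^ k * P) ([:-x, 1:] ^ k * Q) x = sgn (poly P x * poly Q x)"
proof (cases "poly P x \<noteq> 0 \<and> poly Q x \<noteq> 0")
  case True
  then show ?thesis
    using cofactor_eqI[of "[:-x, 1:] ^ k * P" x k P] cofactor_eqI[of "[:-x, 1:] ^ k * Q" x k Q]
    by (auto simp: sgn_ratio_def val_at_def)
next
  case False
  have "order x ([:-x, 1:] ^ k * R) = k + order x R" if "R \<noteq> 0" for R :: "'a poly"
    using that by (simp add: order_mult order_power_n_n)
  then have "val_at ([:-x, 1:] ^ k * P) ([:-x, 1:] ^ k * Q) x \<noteq> 0 \<or> P = 0 \<or> Q = 0"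
    using assms False by (auto simp: val_at_def order_root)
  then show ?thesis
    using False by (auto simp: sgn_ratio_def)
qed

lemma rotation_sgn_eq:
  fixes A :: "'a::linordered_field cpx poly"
  assumes H: "H = [:- cpx_of_real t, 1:] ^ k * A" and c: "poly A (cpx_of_real t) = c" "c \<noteq> 0"
  shows "rotation_sgn r H t = sgn (Im c * (Re c + r * Im c))"
proof -
  have H': "H = map_poly cpx_of_real ([:-t, 1:] ^ k) * A"
    by (simp add: H hom_distribs cpx_of_real_hom.map_poly_pCons_hom)
  have im: "im_poly H = [:-t, 1:] ^ k * im_poly A"
    by (simp only: H' re_im_poly_mult_real)
  have S: "re_poly H + smult r (im_poly H) = [:-t, 1:] ^ k * (re_poly A + smult r (im_poly A))"
    by (simp only: H' re_im_poly_mult_real) (simp add: algebra_simps)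
  have "Im c \<noteq> 0 \<or> Re c + r * Im c \<noteq> 0" using c(2) by (auto simp: cpx_eq_iff)
  then show ?thesis
    unfolding rotation_sgn_def S unfolding im
    using sgn_ratio_common_factor[of "im_poly A" t "re_poly A + smult r (im_poly A)" k] c(1)
    by (simp add: poly_re_poly poly_im_poly)
qed

lemma poly_map_cnj_real:
  "poly (map_poly cnj W) (cpx_of_real t) = cnj (poly W (cpx_of_real (t::'a::linordered_field)))"
  using cnj_hom.poly_map_poly[of W "cpx_of_real t"] by simp

text \<open>Along the line through \<open>z\<close> parametrised by \<open>u(T) = z + \<beta>(T - t)\<close>, a zero of order \<open>m\<close>
  of \<open>F\<close> and \<open>n\<close> of \<open>G\<close> at \<open>z\<close> becomes the factor \<open>\<beta>\<^sup>m \<overline>\<beta>\<^sup>n (T - t)\<^bsup>m+n\<^esup>\<close> of the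
  restriction of \<open>F \<overline>G\<close>.\<close>
lemma edge_prod_at_root:
  fixes F G :: "'a::linordered_field cpx poly" and z \<beta> :: "'a cpx" and t :: 'a
  assumes "F \<noteq> 0" "G \<noteq> 0"
  defines "u \<equiv> [:z - cpx_of_real t * \<beta>, \<beta>:]"
  obtains A where "edge_prod (pcompose F u) (pcompose G u)
      = smult (\<beta> ^ order z F * cnj \<beta> ^ order z G) ([:- cpx_of_real t, 1:] ^ (order z F + order z G) * A)"
    and "poly A (cpx_of_real t) = poly (cofactor F z) z * cnj (poly (cofactor G z) z)"
proof -
  define m n where "m = order z F" and "n = order z G"
  define F1 G1 where "F1 = cofactor F z" and "G1 = cofactor G z"
  have F: "F = [:-z, 1:] ^ m * F1" and G: "G = [:-z, 1:] ^ n * G1"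
    using cofactor_decomp(1)[OF assms(1)] cofactor_decomp(1)[OF assms(2)]
    by (simp_all add: m_def n_def F1_def G1_def)
  have lin: "pcompose [:-z, 1:] u = smult \<beta> [:- cpx_of_real t, 1:]"
    by (simp add: u_def pcompose_pCons algebra_simps)
  have cnj_lin: "map_poly cnj [:- cpx_of_real t, 1:] = [:- cpx_of_real t, 1:]"
    by (simp add: map_poly_pCons cnj_def cpx_eq_iff)
  have Fu: "pcompose F u = smult (\<beta> ^ m) ([:- cpx_of_real t, 1:] ^ m) * pcompose F1 u"
    by (simp only: F pcompose_mult pcompose_hom.hom_power lin smult_power)
  have Gu: "map_poly cnj (pcompose G u)
      = smult (cnj \<beta> ^ n) ([:- cpx_of_real t, 1:] ^ n) * map_poly cnj (pcompose G1 u)"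
    by (simp only: G pcompose_mult pcompose_hom.hom_power lin smult_power cnj_poly.hom_mult
        cnj_hom.map_poly_hom_smult cnj_hom.hom_power cnj_poly.hom_power cnj_lin)
  have "edge_prod (pcompose F u) (pcompose G u)
      = smult (\<beta> ^ m * cnj \<beta> ^ n) ([:- cpx_of_real t, 1:] ^ (m + n)
        * (pcompose F1 u * map_poly cnj (pcompose G1 u)))"
    by (simp add: edge_prod_def Fu Gu power_add mult_ac)
  moreover have "poly u (cpx_of_real t) = z" by (simp add: u_def)
  then have "poly (pcompose F1 u * map_poly cnj (pcompose G1 u)) (cpx_of_real t)
      = poly F1 z * cnj (poly G1 z)"
    by (simp add: poly_pcompose poly_map_cnj_real)
  ultimately show ?thesis unfolding m_def n_def F1_def G1_def by (rule that)
qed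

lemma imag_unit_power_mult_cnj:
  assumes "even (m + n)"
  shows "Cpx 0 1 ^ m * cnj (Cpx 0 1) ^ n = cpx_of_real ((-1) ^ (n + (m + n) div 2) :: 'a::linordered_field)"
proof -
  define i where "i = (Cpx 0 1 :: 'a cpx)"
  obtain e where e: "m + n = 2 * e" using assms by (metis evenE)
  have "i * i = -1" "cnj i = - i" by (simp_all add: i_def cnj_def cpx_eq_iff)
  then have "i ^ m * cnj i ^ n = (-1) ^ n * i ^ (m + n)"
    by (simp only: \<open>cnj i = - i\<close> power_minus[of i n] power_add mult_ac)
  also have "i ^ (m + n) = (-1) ^ e"
    by (simp add: e power_mult power2_eq_square \<open>i * i = -1\<close>)
  also have "(-1) ^ n * (-1) ^ e = ((-1) ^ (n + e) :: 'a cpx)" by (simp add: power_add)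
  also have "\<dots> = cpx_of_real ((-1) ^ (n + e))"
    by (simp only: cpx_of_real_hom.hom_power cpx_of_real_hom.hom_uminus cpx_of_real_hom.hom_one)
  finally show ?thesis by (simp add: i_def e)
qed

lemma rotation_sgn_vertex:
  fixes F G :: "'a::linordered_field cpx poly"
  assumes F: "F \<noteq> 0" and G: "G \<noteq> 0" and even: "even (cval F G (Cpx x y))"
  shows "rotation_sgn r (edge_prod (restr_h F y) (restr_h G y)) x
    = rotation_sgn r (edge_prod (restr_v F x) (restr_v G x)) y"
proof -
  define z i where "z = Cpx x y" and "i = (Cpx 0 1 :: 'a cpx)"
  define m n where "m = order z F" and "n = order z G"
  define c where "c = poly (cofactor F z) z * cnj (poly (cofactor G z) z)"
  have "c \<noteq> 0"
    using cofactor_decomp(2)[OF F] cofactor_decomp(2)[OF G] by (simp add: c_def)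
  have "even (m + n)"
    using even by (simp add: cval_def m_def n_def z_def)
  then obtain d :: 'a where d: "i ^ m * cnj i ^ n = cpx_of_real d" "d * d = 1"
    using imag_unit_power_mult_cnj[of m n] by (fastforce simp: i_def simp flip: power_add)
  then have "d \<noteq> 0" by auto
  have "Cpx 0 y = z - cpx_of_real x * 1" "Cpx x 0 = z - cpx_of_real y * i"
    by (simp_all add: z_def i_def cpx_eq_iff)
  then have h: "restr_h H y = pcompose H [:z - cpx_of_real x * 1, 1:]"
    and v: "restr_v H x = pcompose H [:z - cpx_of_real y * i, i:]" for H
    by (simp_all add: restr_h_def restr_v_def i_def)
  obtain A where A: "edge_prod (restr_h F y) (restr_h G y)
      = smult (1 ^ m * cnj 1 ^ n) ([:- cpx_of_real x, 1:] ^ (m + n) * A)"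
    and "poly A (cpx_of_real x) = c"
    unfolding h m_def n_def c_def by (rule edge_prod_at_root[OF F G])
  obtain B where B: "edge_prod (restr_v F x) (restr_v G x)
      = smult (i ^ m * cnj i ^ n) ([:- cpx_of_real y, 1:] ^ (m + n) * B)"
    and "poly B (cpx_of_real y) = c"
    unfolding v m_def n_def c_def by (rule edge_prod_at_root[OF F G])
  have "rotation_sgn r (edge_prod (restr_h F y) (restr_h G y)) x = sgn (Im c * (Re c + r * Im c))"
    using A \<open>poly A (cpx_of_real x) = c\<close> \<open>c \<noteq> 0\<close> by (intro rotation_sgn_eq[where k = "m + n"]) simp_all
  also have "Im c * (Re c + r * Im c) = (d * d) * (Im c * (Re c + r * Im c))"
    using d(2) by simp
  also have "\<dots> = Im (cpx_of_real d * c) * (Re (cpx_of_real d * c) + r * Im (cpx_of_real d * c))"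
    by (simp add: algebra_simps)
  also have "sgn \<dots> = rotation_sgn r (edge_prod (restr_v F x) (restr_v G x)) y"
    using B \<open>poly B (cpx_of_real y) = c\<close> \<open>c \<noteq> 0\<close> d \<open>d \<noteq> 0\<close>
    by (intro rotation_sgn_eq[symmetric, where k = "m + n" and A = "smult (cpx_of_real d) B"])
      (simp_all add: mult_smult_right)
  finally show ?thesis .
qed

theorem lemma3p5:
  fixes F G :: "'a::real_closed_field cpx poly" and \<gamma> :: "'a cpx"
    and x0 x1 y0 y1 :: 'a
  assumes "F \<noteq> 0" and "G \<noteq> 0" and "\<gamma> \<noteq> 0"
    and "x0 < x1" and "y0 < y1"
    and "\<forall>z\<in>{Cpx x0 y0, Cpx x1 y0, Cpx x1 y1, Cpx x0 y1}. even (cval F G z)"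
  shows "wind_frac F G x0 x1 y0 y1 = wind_frac (smult \<gamma> F) G x0 x1 y0 y1"
proof (cases "Im \<gamma> = 0")
  case True
  with assms(3) show ?thesis
    by (simp add: wind_frac_def Let_def restr_h_smult restr_v_smult edge_prod_smult cind_smult_real)
next
  case False
  define K where "K H t = rotation_sgn (Re \<gamma> / Im \<gamma>) H t" for H t
  have vertex: "K (edge_prod (restr_h F y) (restr_h G y)) x = K (edge_prod (restr_v F x) (restr_v G x)) y"
    if "Cpx x y \<in> {Cpx x0 y0, Cpx x1 y0, Cpx x1 y1, Cpx x0 y1}" for x y
    using rotation_sgn_vertex assms(1,2,6) that unfolding K_def by blast
  show ?thesis
    by (simp add: wind_frac_def Let_def restr_h_smult restr_v_smult edge_prod_smult
        cind_smult_rotate[OF False] vertex field_simps flip: K_def)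
qed

end
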